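(* Let $n\ge 3$ and $d\ge 2$. For every biseparable state $\rho$ on $(\mathbb{C}^d)^{\otimes n}$, $$\mathcal{C}_{n-1}(\rho)\le \max[A,B],$$ where $A=d^n-2d^{n/2}+1$ and $B=(d-1)(d^{n-1}-1)+d^{n-1}-1-\frac{n}{n-1}(d^{n-3}-1)$.
   Context: Consider $n$ qudits with Hilbert space $(\mathbb{C}^d)^{\otimes n}$. Let $\lambda_0=\mathbb{1}_d$ and let $\lambda_1,\dots,\lambda_{d^2-1}$ be Hermitian traceless $d\times d$ matrices normalized so that $\mathrm{Tr}[\lambda_i\lambda_j]=d\,\delta_{ij}$. For a nonempty subset $\alpha\subseteq\{1,\dots,n\}$ and a state $\rho$ with reduced state $\rho_\alpha$, define $\|\tau_\alpha(\rho)\|^2=\sum_{(i_k)_{k\in\alpha}\in\{1,\dots,d^2-1\}^{\alpha}}\big(\mathrm{Tr}[\rho_\alpha\bigotimes_{k\in\alpha}\lambda_{i_k}]\big)^2$, and $\mathcal{C}_{n-1}(\rho)=\sum_{|\alpha|\ge n-1}\|\tau_\alpha(\rho)\|^2$. A state is biseparable if it is a convex combination of pure states each of which is a product $|\phi\rangle_\beta\otimes|\chi\rangle_{\overline{\beta}}$ for some bipartition $\{1,\dots,n\}=\beta\,\dot\cup\,\overline\beta$ into nonempty sets (the bipartition may differ between terms). *)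

theory Defs
  imports "HOL-Analysis.Analysis"
begin

text \<open>Operators on (C^d)^{\<otimes>n}
  are represented by their matrix entries M x y on configurations, vectors by
  their coordinates.\<close>

definition cfg :: "nat \<Rightarrow> nat \<Rightarrow> (nat \<Rightarrow> nat) set" where
  "cfg n d = {x. (\<forall>k<n. x k < d) \<and> (\<forall>k\<ge>n. x k = 0)}"

definition restr :: "nat set \<Rightarrow> (nat \<Rightarrow> nat) \<Rightarrow> (nat \<Rightarrow> nat)" where
  "restr \<beta> x = (\<lambda>k. if k \<in> \<beta> then x k else 0)"

definition gm_basis :: "nat \<Rightarrow> (nat \<Rightarrow> nat \<Rightarrow> nat \<Rightarrow> complex) \<Rightarrow> bool" where
  "gm_basis d lam \<longleftrightarrow>
     (\<forall>i\<in>{1..d^2-1}. \<forall>a<d. \<forall>b<d. lam i a b = cnj (lam i b a)) \<and>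
     (\<forall>i\<in>{1..d^2-1}. (\<Sum>a<d. lam i a a) = 0) \<and>
     (\<forall>i\<in>{1..d^2-1}. \<forall>j\<in>{1..d^2-1}.
        (\<Sum>a<d. \<Sum>b<d. lam i a b * lam j b a) = (if i = j then of_nat d else 0))"

definition idx_tuples :: "nat \<Rightarrow> nat set \<Rightarrow> (nat \<Rightarrow> nat) set" where
  "idx_tuples d \<alpha> = {i. (\<forall>k\<in>\<alpha>. 1 \<le> i k \<and> i k \<le> d^2 - 1) \<and> (\<forall>k. k \<notin> \<alpha> \<longrightarrow> i k = 0)}"

text \<open>Matrix entries of the operator (tensor over k in alpha of lam_{i_k}) tensor identity
  on the complement of alpha.\<close>
definition corr_op :: "nat \<Rightarrow> (nat \<Rightarrow> nat \<Rightarrow> nat \<Rightarrow> complex) \<Rightarrow> nat set \<Rightarrow> (nat \<Rightarrow> nat)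
    \<Rightarrow> (nat \<Rightarrow> nat) \<Rightarrow> (nat \<Rightarrow> nat) \<Rightarrow> complex" where
  "corr_op n lam \<alpha> i x y =
     (\<Prod>k<n. if k \<in> \<alpha> then lam (i k) (x k) (y k) else (if x k = y k then 1 else 0))"

text \<open>Tr[rho_alpha (tensor_{k in alpha} lam_{i_k})] = Tr[rho (tensor lam_{i_k} tensor 1)].\<close>
definition corr :: "nat \<Rightarrow> nat \<Rightarrow> (nat \<Rightarrow> nat \<Rightarrow> nat \<Rightarrow> complex) \<Rightarrow>
    ((nat \<Rightarrow> nat) \<Rightarrow> (nat \<Rightarrow> nat) \<Rightarrow> complex) \<Rightarrow> nat set \<Rightarrow> (nat \<Rightarrow> nat) \<Rightarrow> complex" where
  "corr n d lam \<rho> \<alpha> i = (\<Sum>x\<in>cfg n d. \<Sum>y\<in>cfg n d. \<rho> x y * corr_op n lam \<alpha> i y x)"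

text \<open>||tau_alpha(rho)||^2.  The traces are real for Hermitian rho; we take the real part.\<close>
definition tau_sq :: "nat \<Rightarrow> nat \<Rightarrow> (nat \<Rightarrow> nat \<Rightarrow> nat \<Rightarrow> complex) \<Rightarrow>
    ((nat \<Rightarrow> nat) \<Rightarrow> (nat \<Rightarrow> nat) \<Rightarrow> complex) \<Rightarrow> nat set \<Rightarrow> real" where
  "tau_sq n d lam \<rho> \<alpha> = (\<Sum>i\<in>idx_tuples d \<alpha>. (Re (corr n d lam \<rho> \<alpha> i))^2)"

definition C_nm1 :: "nat \<Rightarrow> nat \<Rightarrow> (nat \<Rightarrow> nat \<Rightarrow> nat \<Rightarrow> complex) \<Rightarrow>
    ((nat \<Rightarrow> nat) \<Rightarrow> (nat \<Rightarrow> nat) \<Rightarrow> complex) \<Rightarrow> real" where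
  "C_nm1 n d lam \<rho> = (\<Sum>\<alpha>\<in>{\<alpha>. \<alpha> \<subseteq> {..<n} \<and> card \<alpha> \<ge> n - 1}. tau_sq n d lam \<rho> \<alpha>)"

definition pure_biprod :: "nat \<Rightarrow> nat \<Rightarrow> ((nat \<Rightarrow> nat) \<Rightarrow> complex) \<Rightarrow> bool" where
  "pure_biprod n d \<psi> \<longleftrightarrow>
     (\<Sum>x\<in>cfg n d. (cmod (\<psi> x))^2) = 1 \<and>
     (\<exists>\<beta>. \<beta> \<subseteq> {..<n} \<and> \<beta> \<noteq> {} \<and> \<beta> \<noteq> {..<n} \<and>
        (\<exists>f g. \<forall>x\<in>cfg n d. \<psi> x = f (restr \<beta> x) * g (restr ({..<n} - \<beta>) x)))"

definition biseparable :: "nat \<Rightarrow> nat \<Rightarrow> ((nat \<Rightarrow> nat) \<Rightarrow> (nat \<Rightarrow> nat) \<Rightarrow> complex) \<Rightarrow> bool" where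
  "biseparable n d \<rho> \<longleftrightarrow>
     (\<exists>(m::nat) p \<psi>. (\<forall>j<m. p j \<ge> (0::real)) \<and> (\<Sum>j<m. p j) = 1 \<and>
        (\<forall>j<m. pure_biprod n d (\<psi> j)) \<and>
        (\<forall>x\<in>cfg n d. \<forall>y\<in>cfg n d.
            \<rho> x y = (\<Sum>j<m. complex_of_real (p j) * \<psi> j x * cnj (\<psi> j y))))"

end

theory Submission
  imports Defs "Jordan_Normal_Form.Determinant"
begin

text \<open>Write the biseparable state as a mixture of pure states \<open>|\<phi>\<rangle>\<^sub>\<beta> \<otimes> |\<chi>\<rangle>\<^sub>R\<close>. Squared
  correlations are convex in the state, so it suffices to bound \<open>C\<^sub>n\<^sub>-\<^sub>1\<close> for such a pure state.

  Completeness of the basis \<open>\<lambda>\<^sub>0 = 1, \<lambda>\<^sub>1, \<dots>\<close> gives a Parseval identity: the total squared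
  correlation of the marginal on \<open>\<delta>\<close> is \<open>d\<^bsup>|\<delta>|\<^esup>\<close> times its purity, hence at most \<open>d\<^bsup>|\<delta>|\<^esup>\<close>,
  with equality for the whole system; complementary marginals have equal purity. For a product
  state the correlation tensor factorises over \<open>\<beta>\<close> and \<open>R\<close>, so the total weights of the two factors
  multiply to \<open>d\<^sup>n\<close> and hence are exactly \<open>d\<^bsup>|\<beta>|\<^esup>\<close> and \<open>d\<^bsup>|R|\<^esup>\<close>.

  If both parts have at least two qudits, every correlation of order \<open>\<ge> n - 1\<close> is nontrivial on
  both factors, which gives \<open>(d\<^bsup>|\<beta>|\<^esup> - 1)(d\<^bsup>|R|\<^esup> - 1) \<le> A\<close> by AM-GM. If \<open>\<beta> = {b}\<close>, then
  \<open>C\<^sub>n\<^sub>-\<^sub>1 = d H + F - H\<close>, where \<open>F\<close> and \<open>H\<close> are the weights of the correlations on \<open>R\<close> of order at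
  least \<open>n - 1\<close> and \<open>n - 2\<close>. Each marginal on \<open>R - {j}\<close> has the purity of the two-qudit marginal on
  \<open>{b, j}\<close>, so its weight is at least \<open>d\<^bsup>n-3\<^esup>\<close>; double counting over \<open>j\<close> then yields \<open>B\<close>.\<close>

section \<open>The generalized Gell-Mann basis\<close>

definition lam_ext ::
    "(nat \<Rightarrow> nat \<Rightarrow> nat \<Rightarrow> complex) \<Rightarrow> nat \<Rightarrow> nat \<Rightarrow> nat \<Rightarrow> complex" where
  "lam_ext lam i a b = (if i = 0 then (if a = b then 1 else 0) else lam i a b)"

lemma sum_diagonal:
  fixes f :: "nat \<Rightarrow> nat \<Rightarrow> 'a::semiring_1"
  shows "(\<Sum>a<d. \<Sum>b<d. (if a = b then 1 else 0) * f a b) = (\<Sum>a<d. f a a)"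
proof (rule sum.cong[OF refl])
  fix a assume "a \<in> {..<d}"
  have "(\<Sum>b<d. (if a = b then 1 else 0) * f a b) = (\<Sum>b<d. if a = b then f a b else 0)"
    by (intro sum.cong) auto
  then show "(\<Sum>b<d. (if a = b then 1 else 0) * f a b) = f a a"
    using \<open>a \<in> {..<d}\<close> by (simp add: sum.delta)
qed

lemma lam_ext_hermitian:
  assumes "gm_basis d lam" "i < d^2" "a < d" "b < d"
  shows "cnj (lam_ext lam i a b) = lam_ext lam i b a"
proof (cases "i = 0")
  case False
  then have "i \<in> {1..d^2-1}" using assms(2) by auto
  then have "lam i b a = cnj (lam i a b)" using assms(1,3,4) unfolding gm_basis_def by blast
  then show ?thesis using False by (simp add: lam_ext_def)
qed (simp add: lam_ext_def)

lemma lam_ext_trace_orthonormal: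
  assumes gm: "gm_basis d lam" and i: "i < d^2" and j: "j < d^2"
  shows "(\<Sum>a<d. \<Sum>b<d. lam_ext lam i a b * lam_ext lam j b a) = (if i = j then of_nat d else 0)"
proof -
  have range: "k \<in> {1..d^2-1}" if "k \<noteq> 0" "k < d^2" for k
    using that by auto
  have traceless: "(\<Sum>a<d. lam k a a) = 0" if "k \<noteq> 0" "k < d^2" for k
    using gm range[OF that] unfolding gm_basis_def by blast
  consider "i = 0" "j = 0" | "i = 0" "j \<noteq> 0" | "i \<noteq> 0" "j = 0" | "i \<noteq> 0" "j \<noteq> 0" by blast
  then show ?thesis
  proof cases
    case 1
    then have "(\<Sum>a<d. \<Sum>b<d. lam_ext lam i a b * lam_ext lam j b a)
        = (\<Sum>a<d. \<Sum>b<d. (if a = b then 1 else 0) * 1)"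
      by (intro sum.cong refl) (simp add: lam_ext_def)
    then show ?thesis using 1 by (simp only: sum_diagonal) simp
  next
    case 2
    then have "(\<Sum>a<d. \<Sum>b<d. lam_ext lam i a b * lam_ext lam j b a)
        = (\<Sum>a<d. \<Sum>b<d. (if a = b then 1 else 0) * lam j b a)"
      by (intro sum.cong refl) (simp add: lam_ext_def)
    then show ?thesis using 2 traceless[OF _ j] by (simp only: sum_diagonal) simp
  next
    case 3
    then have "(\<Sum>a<d. \<Sum>b<d. lam_ext lam i a b * lam_ext lam j b a)
        = (\<Sum>a<d. \<Sum>b<d. (if a = b then 1 else 0) * lam i a b)"
      by (intro sum.cong refl) (simp add: lam_ext_def)
    then show ?thesis using 3 traceless[OF _ i] by (simp only: sum_diagonal) simp
  next
    case 4
    then have "(\<Sum>a<d. \<Sum>b<d. lam i a b * lam j b a) = (if i = j then of_nat d else 0)"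
      using gm range i j unfolding gm_basis_def by blast
    then show ?thesis using 4 by (simp add: lam_ext_def)
  qed
qed

lemma lam_ext_orthogonal:
  assumes "gm_basis d lam" "i < d^2" "j < d^2"
  shows "(\<Sum>a<d. \<Sum>b<d. lam_ext lam i a b * cnj (lam_ext lam j a b))
      = (if i = j then of_nat d else 0)"
proof -
  have "(\<Sum>a<d. \<Sum>b<d. lam_ext lam i a b * cnj (lam_ext lam j a b))
      = (\<Sum>a<d. \<Sum>b<d. lam_ext lam i a b * lam_ext lam j b a)"
    using assms by (intro sum.cong refl) (simp add: lam_ext_hermitian)
  then show ?thesis using lam_ext_trace_orthonormal[OF assms] by simp
qed

lemma pair_index_less: "a < d \<Longrightarrow> b < d \<Longrightarrow> a * d + b < d * (d::nat)"
proof -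
  assume "a < d" "b < d"
  then have "a * d + b < (a + 1) * d" by simp
  also have "\<dots> \<le> d * d" using \<open>a < d\<close> by (intro mult_right_mono) auto
  finally show ?thesis .
qed

lemma sum_lessThan_square_div_mod:
  fixes h :: "nat \<Rightarrow> nat \<Rightarrow> 'a::comm_monoid_add"
  shows "(\<Sum>p<d * d. h (p div d) (p mod d)) = (\<Sum>a<d. \<Sum>b<d. h a b)"
proof -
  have "(\<Sum>p<d * d. h (p div d) (p mod d)) = (\<Sum>(a, b)\<in>{..<d} \<times> {..<d}. h a b)"
  proof (rule sum.reindex_bij_witness[where i="\<lambda>(a, b). a * d + b" and j="\<lambda>p. (p div d, p mod d)"])
    fix p assume "p \<in> {..<d * d}"
    then have "0 < d" by (cases d) auto
    with \<open>p \<in> {..<d * d}\<close> show "(p div d, p mod d) \<in> {..<d} \<times> {..<d}"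
      by (auto simp: less_mult_imp_div_less)
  qed (auto intro: pair_index_less)
  then show ?thesis by (simp add: sum.cartesian_product)
qed

lemma pair_index_eq_iff:
  fixes d :: nat
  assumes "b < d" "b' < d"
  shows "a' * d + b' = a * d + b \<longleftrightarrow> a' = a \<and> b' = b"
proof
  assume eq: "a' * d + b' = a * d + b"
  have "(a' * d + b') div d = a'" "(a' * d + b') mod d = b'" "(a * d + b) div d = a"
      "(a * d + b) mod d = b"
    using assms by auto
  then show "a' = a \<and> b' = b" using eq by metis
qed auto

text \<open>Orthogonality says that the \<open>d\<^sup>2 \<times> d\<^sup>2\<close> matrix with rows \<open>lam_ext lam i\<close> is, up to the
  factor \<open>d\<close>, unitary; since a one-sided inverse of a square matrix is two-sided, its columns
  are orthogonal as well, which is the completeness relation.\<close>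
lemma lam_ext_complete:
  assumes gm: "gm_basis d lam" and ab: "a < d" "b < d" "a' < d" "b' < d"
  shows "(\<Sum>i<d^2. lam_ext lam i a b * cnj (lam_ext lam i a' b'))
      = (if a = a' \<and> b = b' then of_nat d else 0)"
proof -
  have d0: "d > 0" using ab by auto
  define N where "N = d * d"
  define U where "U = mat N N (\<lambda>(i, p). lam_ext lam i (p div d) (p mod d))"
  define W where "W = mat N N (\<lambda>(p, i). cnj (lam_ext lam i (p div d) (p mod d)) / of_nat d)"
  have UC: "U \<in> carrier_mat N N" and WC: "W \<in> carrier_mat N N" unfolding U_def W_def by auto
  have "U * W = 1\<^sub>m N"
  proof (rule eq_matI)
    fix i j assume i: "i < dim_row (1\<^sub>m N)" and j: "j < dim_col (1\<^sub>m N)"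
    then have ij: "i < d^2" "j < d^2" by (auto simp: N_def power2_eq_square)
    have "(U * W) $$ (i, j) = (\<Sum>p<N.
        lam_ext lam i (p div d) (p mod d) * cnj (lam_ext lam j (p div d) (p mod d)) / of_nat d)"
      using i j unfolding U_def W_def by (simp add: scalar_prod_def lessThan_atLeast0)
    also have "\<dots> = (\<Sum>a<d. \<Sum>b<d. lam_ext lam i a b * cnj (lam_ext lam j a b) / of_nat d)"
      unfolding N_def by (rule sum_lessThan_square_div_mod)
    also have "\<dots> = (\<Sum>a<d. \<Sum>b<d. lam_ext lam i a b * cnj (lam_ext lam j a b)) / of_nat d"
      by (simp add: sum_divide_distrib)
    also have "\<dots> = 1\<^sub>m N $$ (i, j)" using lam_ext_orthogonal[OF gm ij] i j d0 by simp
    finally show "(U * W) $$ (i, j) = 1\<^sub>m N $$ (i, j)" .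
  qed (auto simp: U_def W_def)
  then have WU: "W * U = 1\<^sub>m N" by (rule mat_mult_left_right_inverse[OF UC WC])
  have pq: "a' * d + b' < N" "a * d + b < N" unfolding N_def using ab
    by (auto intro: pair_index_less)
  have dm: "(a' * d + b') div d = a'" "(a' * d + b') mod d = b'" "(a * d + b) div d = a"
      "(a * d + b) mod d = b"
    using ab by auto
  have "(\<Sum>i<d^2. lam_ext lam i a b * cnj (lam_ext lam i a' b')) / of_nat d
      = (W * U) $$ (a' * d + b', a * d + b)"
    using pq ab unfolding U_def W_def N_def
    by (simp add: scalar_prod_def lessThan_atLeast0 dm sum_divide_distrib power2_eq_square
        mult.commute)
  also have "\<dots> = (if a' * d + b' = a * d + b then 1 else 0)" unfolding WU using pq by simp
  also have "\<dots> = (if a = a' \<and> b = b' then 1 else 0)"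
    using pair_index_eq_iff[of b d b' a' a] ab by auto
  finally show ?thesis using d0 by (auto simp: divide_eq_eq split: if_splits)
qed

section \<open>Configurations\<close>

text \<open>With bound \<open>d\<close> it is a basis state of the
  qudits in \<open>S\<close>; with bound \<open>d\<^sup>2\<close> it is an index tuple of the correlation tensor, in which
  the index \<open>0\<close> stands for the identity.\<close>
definition cfg_on :: "nat set \<Rightarrow> nat \<Rightarrow> (nat \<Rightarrow> nat) set" where
  "cfg_on S D = {x. (\<forall>k\<in>S. x k < D) \<and> (\<forall>k. k \<notin> S \<longrightarrow> x k = 0)}"

definition cfg_join :: "(nat \<Rightarrow> nat) \<Rightarrow> (nat \<Rightarrow> nat) \<Rightarrow> (nat \<Rightarrow> nat)" where
  "cfg_join u v = (\<lambda>k. u k + v k)"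

lemma cfg_join_comm: "cfg_join u v = cfg_join v u" by (auto simp: cfg_join_def)

lemma cfg_join_zero [simp]: "cfg_join u (\<lambda>_. 0) = u" "cfg_join (\<lambda>_. 0) u = u"
  by (auto simp: cfg_join_def)

lemma cfg_join_left:
  assumes "x \<in> cfg_on S D" "y \<in> cfg_on T D'" "S \<inter> T = {}" "k \<in> S"
  shows "cfg_join x y k = x k"
  using assms by (auto simp: cfg_join_def cfg_on_def)

lemma cfg_join_right:
  assumes "x \<in> cfg_on S D" "y \<in> cfg_on T D'" "S \<inter> T = {}" "k \<in> T"
  shows "cfg_join x y k = y k"
  using assms by (auto simp: cfg_join_def cfg_on_def)

lemma restr_cfg_join_left:
  assumes "x \<in> cfg_on S D" "y \<in> cfg_on T D'" "S \<inter> T = {}"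
  shows "restr S (cfg_join x y) = x"
  using assms by (auto simp: restr_def cfg_join_def cfg_on_def fun_eq_iff)

lemma restr_cfg_join_right:
  assumes "x \<in> cfg_on S D" "y \<in> cfg_on T D'" "S \<inter> T = {}"
  shows "restr T (cfg_join x y) = y"
  using assms by (auto simp: restr_def cfg_join_def cfg_on_def fun_eq_iff)

lemma cfg_join_in_cfg_on:
  assumes "x \<in> cfg_on S D" "y \<in> cfg_on T D" "S \<inter> T = {}"
  shows "cfg_join x y \<in> cfg_on (S \<union> T) D"
  using assms by (auto simp: cfg_join_def cfg_on_def)

lemma cfg_eq_cfg_on: "cfg n d = cfg_on {..<n} d" by (auto simp: cfg_def cfg_on_def not_less)

lemma finite_cfg_on:
  assumes "finite S"
  shows "finite (cfg_on S D)"
proof -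
  have "cfg_on S D = {f. \<forall>x. (x \<in> S \<longrightarrow> f x \<in> {..<D}) \<and> (x \<notin> S \<longrightarrow> f x = 0)}"
    by (auto simp: cfg_on_def)
  then show ?thesis using finite_set_of_finite_funs[OF assms, of "{..<D}" 0] by simp
qed

lemma cfg_on_empty: "cfg_on {} D = {\<lambda>_. 0}" by (auto simp: cfg_on_def)

lemma cfg_on_eq_iff:
  "x \<in> cfg_on S D \<Longrightarrow> x' \<in> cfg_on S D \<Longrightarrow> x = x' \<longleftrightarrow> (\<forall>k\<in>S. x k = x' k)"
  by (auto simp: cfg_on_def fun_eq_iff)

lemma cfg_on_mono: "S \<subseteq> T \<Longrightarrow> D > 0 \<Longrightarrow> cfg_on S D \<subseteq> cfg_on T D"
  by (auto simp: cfg_on_def)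

lemma cfg_on_Diff_singleton:
  "j \<in> S \<Longrightarrow> D > 0 \<Longrightarrow> cfg_on (S - {j}) D = {v \<in> cfg_on S D. v j = 0}"
  by (auto simp: cfg_on_def)

lemma sum_cfg_on_Un:
  assumes "S \<inter> T = {}"
  shows "(\<Sum>x\<in>cfg_on (S \<union> T) D. F x) = (\<Sum>u\<in>cfg_on S D. \<Sum>v\<in>cfg_on T D. F (cfg_join u v))"
proof -
  have "(\<Sum>u\<in>cfg_on S D. \<Sum>v\<in>cfg_on T D. F (cfg_join u v))
      = (\<Sum>p\<in>cfg_on S D \<times> cfg_on T D. F (cfg_join (fst p) (snd p)))"
    by (simp add: sum.cartesian_product case_prod_unfold)
  also have "\<dots> = (\<Sum>x\<in>cfg_on (S \<union> T) D. F x)"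
  proof (rule sum.reindex_bij_witness[where i="\<lambda>x. (restr S x, restr T x)"
        and j="\<lambda>p. cfg_join (fst p) (snd p)"])
    fix p assume p: "p \<in> cfg_on S D \<times> cfg_on T D"
    show "(restr S (cfg_join (fst p) (snd p)), restr T (cfg_join (fst p) (snd p))) = p"
      using p assms
      by (cases p) (auto simp: restr_def cfg_join_def cfg_on_def fun_eq_iff disjoint_iff)
    show "cfg_join (fst p) (snd p) \<in> cfg_on (S \<union> T) D"
      using p assms by (auto simp: cfg_join_def cfg_on_def disjoint_iff)
    show "F (cfg_join (fst p) (snd p)) = F (cfg_join (fst p) (snd p))" ..
  next
    fix x assume x: "x \<in> cfg_on (S \<union> T) D"
    show "cfg_join (fst (restr S x, restr T x)) (snd (restr S x, restr T x)) = x"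
      using x assms by (auto simp: restr_def cfg_join_def cfg_on_def fun_eq_iff disjoint_iff)
    show "(restr S x, restr T x) \<in> cfg_on S D \<times> cfg_on T D"
      using x by (auto simp: restr_def cfg_on_def)
  qed
  finally show ?thesis ..
qed

lemma sum_cfg_on_complement:
  assumes \<beta>: "\<beta> \<subseteq> {..<n}"
  shows "(\<Sum>i\<in>cfg_on {..<n} D. F i)
      = (\<Sum>u\<in>cfg_on \<beta> D. \<Sum>v\<in>cfg_on ({..<n} - \<beta>) D. F (cfg_join u v))"
proof -
  have "{..<n} = \<beta> \<union> ({..<n} - \<beta>)" using \<beta> by auto
  then show ?thesis by (metis sum_cfg_on_Un Diff_disjoint)
qed

lemma sum_sum_cfg_on_Un:
  assumes "S \<inter> T = {}"
  shows "(\<Sum>x\<in>cfg_on (S \<union> T) D. \<Sum>y\<in>cfg_on (S \<union> T) D. F x y)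
       = (\<Sum>x1\<in>cfg_on S D. \<Sum>x2\<in>cfg_on T D. \<Sum>y1\<in>cfg_on S D. \<Sum>y2\<in>cfg_on T D.
            F (cfg_join x1 x2) (cfg_join y1 y2))"
  unfolding sum_cfg_on_Un[OF assms] ..

lemma sum_cfg_on_singleton: "(\<Sum>x\<in>cfg_on {s} D. F x) = (\<Sum>t<D. F ((\<lambda>_. 0)(s := t)))"
proof (rule sum.reindex_bij_witness[where i="\<lambda>t. (\<lambda>_. 0)(s := t)" and j="\<lambda>x. x s"])
  fix x assume x: "x \<in> cfg_on {s} D"
  then show "(\<lambda>_. 0)(s := x s) = x" by (auto simp: cfg_on_def fun_eq_iff)
  then show "F ((\<lambda>_. 0)(s := x s)) = F x" by simp
  show "x s \<in> {..<D}" using x by (auto simp: cfg_on_def)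
qed (auto simp: cfg_on_def)

lemma sum_prod_cfg_on:
  fixes f :: "nat \<Rightarrow> nat \<Rightarrow> 'a::comm_semiring_1"
  assumes "finite S"
  shows "(\<Sum>i\<in>cfg_on S D. \<Prod>k\<in>S. f k (i k)) = (\<Prod>k\<in>S. \<Sum>t<D. f k t)"
  using assms
proof (induction S rule: finite_induct)
  case empty
  show ?case by (simp add: cfg_on_empty)
next
  case (insert s S)
  have "(\<Sum>i\<in>cfg_on (insert s S) D. \<Prod>k\<in>insert s S. f k (i k))
      = (\<Sum>u\<in>cfg_on {s} D. \<Sum>v\<in>cfg_on S D. \<Prod>k\<in>insert s S. f k (cfg_join u v k))"
    using sum_cfg_on_Un[where S="{s}" and T=S and F="\<lambda>i. \<Prod>k\<in>insert s S. f k (i k)"] insert(2)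
    by simp
  also have "\<dots> = (\<Sum>t<D. \<Sum>v\<in>cfg_on S D. f s t * (\<Prod>k\<in>S. f k (v k)))"
  proof (subst sum_cfg_on_singleton, intro sum.cong refl)
    fix t v assume v: "v \<in> cfg_on S D"
    let ?u = "((\<lambda>_. 0)(s := t)) :: nat \<Rightarrow> nat"
    have "(\<Prod>k\<in>insert s S. f k (cfg_join ?u v k))
        = f s (cfg_join ?u v s) * (\<Prod>k\<in>S. f k (cfg_join ?u v k))"
      using insert(1,2) by simp
    also have "cfg_join ?u v s = t"
      using v insert(2) by (auto simp: cfg_join_def cfg_on_def)
    also have "(\<Prod>k\<in>S. f k (cfg_join ?u v k)) = (\<Prod>k\<in>S. f k (v k))"
      using insert(2) by (intro prod.cong refl) (auto simp: cfg_join_def)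
    finally show "(\<Prod>k\<in>insert s S. f k (cfg_join ?u v k)) = f s t * (\<Prod>k\<in>S. f k (v k))" .
  qed
  also have "\<dots> = (\<Sum>t<D. f s t) * (\<Sum>v\<in>cfg_on S D. \<Prod>k\<in>S. f k (v k))"
    by (rule sum_product[symmetric])
  also have "\<dots> = (\<Prod>k\<in>insert s S. \<Sum>t<D. f k t)" using insert by simp
  finally show ?case .
qed

definition cfg_supp :: "(nat \<Rightarrow> nat) \<Rightarrow> nat set" where
  "cfg_supp i = {k. i k \<noteq> 0}"

lemma cfg_supp_subset: "i \<in> cfg_on S D \<Longrightarrow> cfg_supp i \<subseteq> S"
  by (auto simp: cfg_supp_def cfg_on_def)

lemma cfg_supp_zero [simp]: "cfg_supp (\<lambda>_. 0) = {}"
  by (simp add: cfg_supp_def)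

lemma cfg_supp_empty_iff: "cfg_supp i = {} \<longleftrightarrow> i = (\<lambda>_. 0)"
  by (auto simp: cfg_supp_def fun_eq_iff)

lemma card_cfg_supp_le: "finite S \<Longrightarrow> i \<in> cfg_on S D \<Longrightarrow> card (cfg_supp i) \<le> card S"
  by (rule card_mono) (auto dest: cfg_supp_subset)

lemma card_cfg_supp_join:
  assumes "u \<in> cfg_on S D" "v \<in> cfg_on T D" "S \<inter> T = {}" "finite S" "finite T"
  shows "card (cfg_supp (cfg_join u v)) = card (cfg_supp u) + card (cfg_supp v)"
proof -
  have "cfg_supp (cfg_join u v) = cfg_supp u \<union> cfg_supp v"
    by (auto simp: cfg_supp_def cfg_join_def)
  moreover have "cfg_supp u \<inter> cfg_supp v = {}"
    using cfg_supp_subset[OF assms(1)] cfg_supp_subset[OF assms(2)] assms(3) by auto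
  moreover have "finite (cfg_supp u)" "finite (cfg_supp v)"
    using cfg_supp_subset[OF assms(1)] cfg_supp_subset[OF assms(2)] assms(4,5)
    by (auto intro: finite_subset)
  ultimately show ?thesis by (simp add: card_Un_disjoint)
qed

lemma sum_swap3:
  "(\<Sum>i\<in>I. \<Sum>a\<in>A. \<Sum>b\<in>B. g i a b) = (\<Sum>a\<in>A. \<Sum>b\<in>B. \<Sum>i\<in>I. (g i a b :: 'a::comm_monoid_add))"
proof -
  have "(\<Sum>i\<in>I. \<Sum>a\<in>A. \<Sum>b\<in>B. g i a b) = (\<Sum>a\<in>A. \<Sum>i\<in>I. \<Sum>b\<in>B. g i a b)"
    by (rule sum.swap)
  also have "\<dots> = (\<Sum>a\<in>A. \<Sum>b\<in>B. \<Sum>i\<in>I. g i a b)"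
    by (intro sum.cong refl) (rule sum.swap)
  finally show ?thesis .
qed

lemma sum_swap4:
  "(\<Sum>x\<in>X. \<Sum>y\<in>Y. \<Sum>a\<in>A. \<Sum>b\<in>B. g x y a b)
    = (\<Sum>a\<in>A. \<Sum>b\<in>B. \<Sum>x\<in>X. \<Sum>y\<in>Y. (g x y a b :: 'a::comm_monoid_add))"
proof -
  have "(\<Sum>x\<in>X. \<Sum>y\<in>Y. \<Sum>a\<in>A. \<Sum>b\<in>B. g x y a b)
      = (\<Sum>x\<in>X. \<Sum>a\<in>A. \<Sum>b\<in>B. \<Sum>y\<in>Y. g x y a b)"
    by (intro sum.cong refl) (rule sum_swap3)
  also have "\<dots> = (\<Sum>a\<in>A. \<Sum>b\<in>B. \<Sum>x\<in>X. \<Sum>y\<in>Y. g x y a b)"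
    by (rule sum_swap3)
  finally show ?thesis .
qed

lemma sum4_product:
  "(\<Sum>x1\<in>X1. \<Sum>x2\<in>X2. \<Sum>y1\<in>Y1. \<Sum>y2\<in>Y2. A x1 y1 * B x2 y2)
    = (\<Sum>x1\<in>X1. \<Sum>y1\<in>Y1. A x1 y1) * (\<Sum>x2\<in>X2. \<Sum>y2\<in>Y2. (B x2 y2 :: 'a::comm_semiring_0))"
proof -
  have "(\<Sum>x1\<in>X1. \<Sum>x2\<in>X2. \<Sum>y1\<in>Y1. \<Sum>y2\<in>Y2. A x1 y1 * B x2 y2)
      = (\<Sum>x1\<in>X1. \<Sum>y1\<in>Y1. \<Sum>x2\<in>X2. \<Sum>y2\<in>Y2. A x1 y1 * B x2 y2)"
    by (rule sum.cong[OF refl], rule sum.swap)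
  also have "\<dots> = (\<Sum>x1\<in>X1. \<Sum>y1\<in>Y1. A x1 y1 * (\<Sum>x2\<in>X2. \<Sum>y2\<in>Y2. B x2 y2))"
    by (simp add: sum_distrib_left)
  also have "\<dots> = (\<Sum>x1\<in>X1. \<Sum>y1\<in>Y1. A x1 y1) * (\<Sum>x2\<in>X2. \<Sum>y2\<in>Y2. B x2 y2)"
    by (simp add: sum_distrib_right)
  finally show ?thesis .
qed

lemma prod_if_const:
  "finite S \<Longrightarrow> (\<Prod>k\<in>S. if P k then c else (0::'a::comm_semiring_1))
    = (if \<forall>k\<in>S. P k then c ^ card S else 0)"
  by (induction S rule: finite_induct) auto

lemma sum_if_neq:
  fixes h :: "'a \<Rightarrow> 'b::ab_group_add"
  assumes "finite A" "z \<in> A"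
  shows "(\<Sum>u\<in>A. (if u \<noteq> z then h u else 0)) = (\<Sum>u\<in>A. h u) - h z"
proof -
  have "(\<Sum>u\<in>A. h u) = (\<Sum>u\<in>A. (if u \<noteq> z then h u else 0) + (if u = z then h u else 0))"
    by (intro sum.cong refl) auto
  also have "\<dots> = (\<Sum>u\<in>A. (if u \<noteq> z then h u else 0)) + h z"
    using assms by (simp add: sum.distrib sum.delta')
  finally show ?thesis by simp
qed

lemma cmod_sum_mult_cnj_le:
  fixes p q :: "'a \<Rightarrow> complex"
  shows "(cmod (\<Sum>a\<in>A. p a * cnj (q a)))^2
    \<le> (\<Sum>a\<in>A. (cmod (p a))^2) * (\<Sum>a\<in>A. (cmod (q a))^2)"
proof -
  have "cmod (\<Sum>a\<in>A. p a * cnj (q a)) \<le> (\<Sum>a\<in>A. cmod (p a * cnj (q a)))"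
    by (rule norm_sum)
  also have "\<dots> = (\<Sum>a\<in>A. cmod (p a) * cmod (q a))"
    by (simp add: norm_mult)
  finally have "(cmod (\<Sum>a\<in>A. p a * cnj (q a)))^2 \<le> (\<Sum>a\<in>A. cmod (p a) * cmod (q a))^2"
    by (rule power_mono) simp
  also have "\<dots> \<le> (\<Sum>a\<in>A. (cmod (p a))^2) * (\<Sum>a\<in>A. (cmod (q a))^2)"
    by (rule Cauchy_Schwarz_ineq_sum)
  finally show ?thesis .
qed

text \<open>This is \<open>tr (\<Phi>\<Phi>\<^sup>*)\<^sup>2 = tr (\<Phi>\<^sup>*\<Phi>)\<^sup>2\<close>; it makes complementary marginals of a pure state
  equally pure.\<close>
lemma sum_norm_gram_swap:
  fixes \<Phi> :: "'a \<Rightarrow> 'b \<Rightarrow> complex"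
  shows "(\<Sum>x\<in>X. \<Sum>y\<in>X. (cmod (\<Sum>a\<in>A. \<Phi> x a * cnj (\<Phi> y a)))^2)
       = (\<Sum>a\<in>A. \<Sum>b\<in>A. (cmod (\<Sum>x\<in>X. \<Phi> x a * cnj (\<Phi> x b)))^2)"
proof -
  have "complex_of_real (\<Sum>x\<in>X. \<Sum>y\<in>X. (cmod (\<Sum>a\<in>A. \<Phi> x a * cnj (\<Phi> y a)))^2)
      = (\<Sum>x\<in>X. \<Sum>y\<in>X. (\<Sum>a\<in>A. \<Phi> x a * cnj (\<Phi> y a)) * cnj (\<Sum>b\<in>A. \<Phi> x b * cnj (\<Phi> y b)))"
    by (simp only: of_real_sum complex_norm_square)
  also have "\<dots> = (\<Sum>x\<in>X. \<Sum>y\<in>X. \<Sum>b\<in>A. \<Sum>a\<in>A. \<Phi> x a * cnj (\<Phi> y a) * (cnj (\<Phi> x b) * \<Phi> y b))"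
    by (simp add: sum_distrib_left sum_distrib_right)
  also have "\<dots> = (\<Sum>b\<in>A. \<Sum>a\<in>A. \<Sum>x\<in>X. \<Sum>y\<in>X. \<Phi> x a * cnj (\<Phi> y a) * (cnj (\<Phi> x b) * \<Phi> y b))"
    by (rule sum_swap4)
  also have "\<dots> = (\<Sum>a\<in>A. \<Sum>b\<in>A. \<Sum>x\<in>X. \<Sum>y\<in>X. \<Phi> x a * cnj (\<Phi> y a) * (cnj (\<Phi> x b) * \<Phi> y b))"
    by (rule sum.swap)
  also have "\<dots> = (\<Sum>a\<in>A. \<Sum>b\<in>A. (\<Sum>x\<in>X. \<Phi> x a * cnj (\<Phi> x b)) * cnj (\<Sum>y\<in>X. \<Phi> y a * cnj (\<Phi> y b)))"
  proof (rule sum.cong[OF refl], rule sum.cong[OF refl])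
    fix a b
    have e: "(\<Sum>x\<in>X. \<Phi> x a * cnj (\<Phi> x b)) * cnj (\<Sum>y\<in>X. \<Phi> y a * cnj (\<Phi> y b))
       = (\<Sum>y\<in>X. \<Sum>x\<in>X. \<Phi> x a * cnj (\<Phi> y a) * (cnj (\<Phi> x b) * \<Phi> y b))"
      by (simp add: sum_distrib_left sum_distrib_right mult_ac)
    show "(\<Sum>x\<in>X. \<Sum>y\<in>X. \<Phi> x a * cnj (\<Phi> y a) * (cnj (\<Phi> x b) * \<Phi> y b)) =
      (\<Sum>x\<in>X. \<Phi> x a * cnj (\<Phi> x b)) * cnj (\<Sum>y\<in>X. \<Phi> y a * cnj (\<Phi> y b))"
      unfolding e by (rule sum.swap)
  qed
  also have "\<dots> = complex_of_real (\<Sum>a\<in>A. \<Sum>b\<in>A. (cmod (\<Sum>x\<in>X. \<Phi> x a * cnj (\<Phi> x b)))^2)"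
    by (simp only: of_real_sum complex_norm_square)
  finally show ?thesis by (simp only: of_real_eq_iff)
qed

section \<open>Parseval's identity for the tensor basis\<close>

text \<open>The \<open>(y, x)\<close> entry of \<open>\<Lambda>\<^sub>i = \<Otimes>\<^sub>k\<^sub>\<in>\<^sub>\<delta> \<lambda>\<^bsub>i k\<^esub>\<close>.\<close>
definition lam_tensor :: "(nat \<Rightarrow> nat \<Rightarrow> nat \<Rightarrow> complex) \<Rightarrow> nat set
    \<Rightarrow> (nat \<Rightarrow> nat) \<Rightarrow> (nat \<Rightarrow> nat) \<Rightarrow> (nat \<Rightarrow> nat) \<Rightarrow> complex" where
  "lam_tensor lam \<delta> i y x = (\<Prod>k\<in>\<delta>. lam_ext lam (i k) (y k) (x k))"

lemma lam_tensor_complete: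
  assumes gm: "gm_basis d lam" and fin: "finite \<delta>"
    and xy: "x \<in> cfg_on \<delta> d" "y \<in> cfg_on \<delta> d" "x' \<in> cfg_on \<delta> d" "y' \<in> cfg_on \<delta> d"
  shows "(\<Sum>i\<in>cfg_on \<delta> (d^2). lam_tensor lam \<delta> i y x * cnj (lam_tensor lam \<delta> i y' x'))
     = (if x = x' \<and> y = y' then (of_nat d) ^ card \<delta> else 0)"
proof -
  let ?f = "\<lambda>k t. lam_ext lam t (y k) (x k) * cnj (lam_ext lam t (y' k) (x' k))"
  have "(\<Sum>i\<in>cfg_on \<delta> (d^2). lam_tensor lam \<delta> i y x * cnj (lam_tensor lam \<delta> i y' x'))
      = (\<Sum>i\<in>cfg_on \<delta> (d^2). \<Prod>k\<in>\<delta>. ?f k (i k))"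
    unfolding lam_tensor_def by (simp add: prod.distrib)
  also have "\<dots> = (\<Prod>k\<in>\<delta>. \<Sum>t<d^2. ?f k t)"
    by (rule sum_prod_cfg_on[OF fin])
  also have "\<dots> = (\<Prod>k\<in>\<delta>. (if y k = y' k \<and> x k = x' k then of_nat d else 0))"
  proof (rule prod.cong[OF refl])
    fix k assume "k \<in> \<delta>"
    then have "y k < d" "x k < d" "y' k < d" "x' k < d" using xy by (auto simp: cfg_on_def)
    then show "(\<Sum>t<d^2. ?f k t) = (if y k = y' k \<and> x k = x' k then of_nat d else 0)"
      by (rule lam_ext_complete[OF gm])
  qed
  also have "\<dots> = (if (\<forall>k\<in>\<delta>. y k = y' k \<and> x k = x' k) then (of_nat d) ^ card \<delta> else 0)"
    by (rule prod_if_const[OF fin])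
  also have "(\<forall>k\<in>\<delta>. y k = y' k \<and> x k = x' k) = (x = x' \<and> y = y')"
    using cfg_on_eq_iff[OF xy(1,3)] cfg_on_eq_iff[OF xy(2,4)] by blast
  finally show ?thesis .
qed

lemma lam_tensor_expansion:
  assumes gm: "gm_basis d lam" and fin: "finite \<delta>" and xy: "x \<in> cfg_on \<delta> d" "y \<in> cfg_on \<delta> d"
  shows "(\<Sum>i\<in>cfg_on \<delta> (d^2). lam_tensor lam \<delta> i y x
      * cnj (\<Sum>x'\<in>cfg_on \<delta> d. \<Sum>y'\<in>cfg_on \<delta> d. K x' y' * lam_tensor lam \<delta> i y' x'))
    = (of_nat d) ^ card \<delta> * cnj (K x y)"
proof -
  let ?X = "cfg_on \<delta> d"
  have "(\<Sum>i\<in>cfg_on \<delta> (d^2). lam_tensor lam \<delta> i y x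
      * cnj (\<Sum>x'\<in>?X. \<Sum>y'\<in>?X. K x' y' * lam_tensor lam \<delta> i y' x'))
      = (\<Sum>i\<in>cfg_on \<delta> (d^2). \<Sum>x'\<in>?X. \<Sum>y'\<in>?X.
          cnj (K x' y') * (lam_tensor lam \<delta> i y x * cnj (lam_tensor lam \<delta> i y' x')))"
    by (simp add: sum_distrib_left algebra_simps)
  also have "\<dots> = (\<Sum>x'\<in>?X. \<Sum>y'\<in>?X. \<Sum>i\<in>cfg_on \<delta> (d^2). cnj (K x' y')
      * (lam_tensor lam \<delta> i y x * cnj (lam_tensor lam \<delta> i y' x')))"
    by (rule sum_swap3)
  also have "\<dots> = (\<Sum>x'\<in>?X. \<Sum>y'\<in>?X. cnj (K x' y')
      * (if x = x' \<and> y = y' then (of_nat d) ^ card \<delta> else 0))"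
    by (intro sum.cong refl, simp only: sum_distrib_left[symmetric],
        subst lam_tensor_complete[OF gm fin xy], auto)
  also have "\<dots> = (\<Sum>x'\<in>?X. if x = x' then cnj (K x' y) * (of_nat d) ^ card \<delta> else 0)"
    using xy finite_cfg_on[OF fin]
    by (intro sum.cong refl) (auto simp: if_distrib sum.delta sum.delta' cong: if_cong)
  also have "\<dots> = (of_nat d) ^ card \<delta> * cnj (K x y)"
    using xy finite_cfg_on[OF fin] by (simp add: sum.delta)
  finally show ?thesis .
qed

lemma lam_tensor_parseval:
  assumes gm: "gm_basis d lam" and fin: "finite \<delta>"
  shows "(\<Sum>i\<in>cfg_on \<delta> (d^2). (\<Sum>x\<in>cfg_on \<delta> d. \<Sum>y\<in>cfg_on \<delta> d. M x y * lam_tensor lam \<delta> i y x)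
             * cnj (\<Sum>x\<in>cfg_on \<delta> d. \<Sum>y\<in>cfg_on \<delta> d. K x y * lam_tensor lam \<delta> i y x))
    = (of_nat d) ^ card \<delta> * (\<Sum>x\<in>cfg_on \<delta> d. \<Sum>y\<in>cfg_on \<delta> d. M x y * cnj (K x y))"
proof -
  let ?X = "cfg_on \<delta> d"
  let ?C = "\<lambda>i. cnj (\<Sum>x\<in>?X. \<Sum>y\<in>?X. K x y * lam_tensor lam \<delta> i y x)"
  have "(\<Sum>i\<in>cfg_on \<delta> (d^2). (\<Sum>x\<in>?X. \<Sum>y\<in>?X. M x y * lam_tensor lam \<delta> i y x) * ?C i)
      = (\<Sum>i\<in>cfg_on \<delta> (d^2). \<Sum>x\<in>?X. \<Sum>y\<in>?X. M x y * (lam_tensor lam \<delta> i y x * ?C i))"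
    by (simp add: sum_distrib_right mult.assoc)
  also have "\<dots> = (\<Sum>x\<in>?X. \<Sum>y\<in>?X. \<Sum>i\<in>cfg_on \<delta> (d^2). M x y * (lam_tensor lam \<delta> i y x * ?C i))"
    by (rule sum_swap3)
  also have "\<dots> = (\<Sum>x\<in>?X. \<Sum>y\<in>?X. M x y * ((of_nat d) ^ card \<delta> * cnj (K x y)))"
  proof (intro sum.cong refl)
    fix x y assume "x \<in> ?X" "y \<in> ?X"
    show "(\<Sum>i\<in>cfg_on \<delta> (d^2). M x y * (lam_tensor lam \<delta> i y x * ?C i))
        = M x y * ((of_nat d) ^ card \<delta> * cnj (K x y))"
      by (simp only: sum_distrib_left[symmetric],
          subst lam_tensor_expansion[OF gm fin \<open>x \<in> ?X\<close> \<open>y \<in> ?X\<close>], rule refl)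
  qed
  also have "\<dots> = (of_nat d) ^ card \<delta> * (\<Sum>x\<in>?X. \<Sum>y\<in>?X. M x y * cnj (K x y))"
    by (simp add: sum_distrib_left algebra_simps)
  finally show ?thesis .
qed

lemma lam_tensor_Un:
  assumes fin: "finite S" "finite T" and disj: "S \<inter> T = {}"
    and xy: "x1 \<in> cfg_on S d" "y1 \<in> cfg_on S d" "x2 \<in> cfg_on T d" "y2 \<in> cfg_on T d"
    and u: "u \<in> cfg_on S D" and v: "v \<in> cfg_on T D'"
  shows "lam_tensor lam (S \<union> T) (cfg_join u v) (cfg_join y1 y2) (cfg_join x1 x2)
      = lam_tensor lam S u y1 x1 * lam_tensor lam T v y2 x2"
proof -
  let ?f = "\<lambda>k. lam_ext lam (cfg_join u v k) (cfg_join y1 y2 k) (cfg_join x1 x2 k)"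
  have "lam_tensor lam (S \<union> T) (cfg_join u v) (cfg_join y1 y2) (cfg_join x1 x2)
      = prod ?f S * prod ?f T"
    unfolding lam_tensor_def by (rule prod.union_disjoint[OF fin disj])
  also have "prod ?f S = lam_tensor lam S u y1 x1"
    unfolding lam_tensor_def using xy u v disj by (intro prod.cong refl) (simp add: cfg_join_left)
  also have "prod ?f T = lam_tensor lam T v y2 x2"
    unfolding lam_tensor_def using xy u v disj by (intro prod.cong refl) (simp add: cfg_join_right)
  finally show ?thesis .
qed

lemma lam_tensor_identity:
  assumes fin: "finite T" and a: "a \<in> cfg_on T d" "a' \<in> cfg_on T d"
  shows "lam_tensor lam T (\<lambda>_. 0) a' a = (if a' = a then 1 else 0)"
proof -
  have "lam_tensor lam T (\<lambda>_. 0) a' a = (\<Prod>k\<in>T. if a' k = a k then 1 else 0)"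
    unfolding lam_tensor_def lam_ext_def by simp
  also have "\<dots> = (if \<forall>k\<in>T. a' k = a k then 1 ^ card T else 0)"
    by (rule prod_if_const[OF fin])
  also have "(\<forall>k\<in>T. a' k = a k) \<longleftrightarrow> a' = a"
    using cfg_on_eq_iff[OF a(2,1)] by simp
  finally show ?thesis by simp
qed

section \<open>Correlations of pure states\<close>

text \<open>The correlation tensor \<open>tr (|\<psi>\<rangle>\<langle>\<psi>| \<Lambda>\<^sub>i)\<close> of a pure state; its entries with \<open>i k = 0\<close> are the
  correlations of the marginal on \<open>cfg_supp i\<close>.\<close>
definition pure_corr :: "(nat \<Rightarrow> nat \<Rightarrow> nat \<Rightarrow> complex) \<Rightarrow> nat \<Rightarrow> nat
    \<Rightarrow> ((nat \<Rightarrow> nat) \<Rightarrow> complex) \<Rightarrow> (nat \<Rightarrow> nat) \<Rightarrow> complex" where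
  "pure_corr lam n d \<psi> i = (\<Sum>x\<in>cfg_on {..<n} d. \<Sum>y\<in>cfg_on {..<n} d.
     (\<psi> x * cnj (\<psi> y)) * lam_tensor lam {..<n} i y x)"

definition reduced_dm :: "nat \<Rightarrow> nat \<Rightarrow> ((nat \<Rightarrow> nat) \<Rightarrow> complex) \<Rightarrow> nat set
    \<Rightarrow> (nat \<Rightarrow> nat) \<Rightarrow> (nat \<Rightarrow> nat) \<Rightarrow> complex" where
  "reduced_dm n d \<psi> \<delta> x1 y1
      = (\<Sum>a\<in>cfg_on ({..<n} - \<delta>) d. \<psi> (cfg_join x1 a) * cnj (\<psi> (cfg_join y1 a)))"

lemma pure_corr_reduced:
  assumes \<delta>: "\<delta> \<subseteq> {..<n}" and i: "i \<in> cfg_on \<delta> D"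
  shows "pure_corr lam n d \<psi> i
      = (\<Sum>x1\<in>cfg_on \<delta> d. \<Sum>y1\<in>cfg_on \<delta> d. reduced_dm n d \<psi> \<delta> x1 y1 * lam_tensor lam \<delta> i y1 x1)"
proof -
  define R where "R = {..<n} - \<delta>"
  have N: "{..<n} = \<delta> \<union> R" and disj: "\<delta> \<inter> R = {}" using \<delta> unfolding R_def by auto
  have fin: "finite \<delta>" "finite R" using \<delta> unfolding R_def by (auto intro: finite_subset)
  have z: "(\<lambda>_. 0) \<in> cfg_on R 1" by (simp add: cfg_on_def)
  have "pure_corr lam n d \<psi> i
      = (\<Sum>x1\<in>cfg_on \<delta> d. \<Sum>a\<in>cfg_on R d. \<Sum>y1\<in>cfg_on \<delta> d. \<Sum>a'\<in>cfg_on R d.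
          (\<psi> (cfg_join x1 a) * cnj (\<psi> (cfg_join y1 a')))
          * lam_tensor lam (\<delta> \<union> R) i (cfg_join y1 a') (cfg_join x1 a))"
    unfolding pure_corr_def N by (rule sum_sum_cfg_on_Un[OF disj])
  also have "\<dots> = (\<Sum>x1\<in>cfg_on \<delta> d. \<Sum>a\<in>cfg_on R d. \<Sum>y1\<in>cfg_on \<delta> d. \<Sum>a'\<in>cfg_on R d.
      if a' = a then (\<psi> (cfg_join x1 a) * cnj (\<psi> (cfg_join y1 a'))) * lam_tensor lam \<delta> i y1 x1
      else 0)"
  proof (intro sum.cong refl)
    fix x1 a y1 a' assume h: "x1 \<in> cfg_on \<delta> d" "a \<in> cfg_on R d" "y1 \<in> cfg_on \<delta> d" "a' \<in> cfg_on R d"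
    have "lam_tensor lam (\<delta> \<union> R) i (cfg_join y1 a') (cfg_join x1 a)
        = lam_tensor lam \<delta> i y1 x1 * lam_tensor lam R (\<lambda>_. 0) a' a"
      using lam_tensor_Un[OF fin disj h(1) h(3) h(2) h(4) i z, of lam] by simp
    also have "\<dots> = (if a' = a then lam_tensor lam \<delta> i y1 x1 else 0)"
      using lam_tensor_identity[OF fin(2) h(2) h(4)] by simp
    finally show "(\<psi> (cfg_join x1 a) * cnj (\<psi> (cfg_join y1 a')))
        * lam_tensor lam (\<delta> \<union> R) i (cfg_join y1 a') (cfg_join x1 a)
      = (if a' = a then (\<psi> (cfg_join x1 a) * cnj (\<psi> (cfg_join y1 a'))) * lam_tensor lam \<delta> i y1 x1
         else 0)"
      by simp
  qed
  also have "\<dots> = (\<Sum>x1\<in>cfg_on \<delta> d. \<Sum>a\<in>cfg_on R d. \<Sum>y1\<in>cfg_on \<delta> d.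
      (\<psi> (cfg_join x1 a) * cnj (\<psi> (cfg_join y1 a))) * lam_tensor lam \<delta> i y1 x1)"
    using finite_cfg_on[OF fin(2)] by (intro sum.cong refl) (simp add: sum.delta)
  also have "\<dots> = (\<Sum>x1\<in>cfg_on \<delta> d. \<Sum>y1\<in>cfg_on \<delta> d. \<Sum>a\<in>cfg_on R d.
      (\<psi> (cfg_join x1 a) * cnj (\<psi> (cfg_join y1 a))) * lam_tensor lam \<delta> i y1 x1)"
    by (rule sum.cong[OF refl], rule sum.swap)
  also have "\<dots> = (\<Sum>x1\<in>cfg_on \<delta> d. \<Sum>y1\<in>cfg_on \<delta> d. reduced_dm n d \<psi> \<delta> x1 y1
      * lam_tensor lam \<delta> i y1 x1)"
    unfolding reduced_dm_def R_def by (simp add: sum_distrib_right)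
  finally show ?thesis .
qed

lemma pure_corr_zero:
  "pure_corr lam n d \<psi> (\<lambda>_. 0) = (\<Sum>x\<in>cfg_on {..<n} d. \<psi> x * cnj (\<psi> x))"
proof -
  have "pure_corr lam n d \<psi> (\<lambda>_. 0)
      = (\<Sum>x\<in>cfg_on {} d. \<Sum>y\<in>cfg_on {} d. reduced_dm n d \<psi> {} x y * lam_tensor lam {} (\<lambda>_. 0) y x)"
    by (rule pure_corr_reduced) (auto simp: cfg_on_def)
  also have "\<dots> = (\<Sum>x\<in>cfg_on {..<n} d. \<psi> x * cnj (\<psi> x))"
    by (simp add: cfg_on_empty reduced_dm_def lam_tensor_def)
  finally show ?thesis .
qed

lemma pure_corr_zero_normalized:
  assumes "(\<Sum>x\<in>cfg_on {..<n} d. (cmod (\<psi> x))^2) = 1"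
  shows "pure_corr lam n d \<psi> (\<lambda>_. 0) = 1"
proof -
  have "pure_corr lam n d \<psi> (\<lambda>_. 0) = complex_of_real (\<Sum>x\<in>cfg_on {..<n} d. (cmod (\<psi> x))^2)"
    unfolding pure_corr_zero by (simp only: of_real_sum complex_norm_square)
  then show ?thesis using assms by simp
qed

definition purity :: "nat \<Rightarrow> nat \<Rightarrow> ((nat \<Rightarrow> nat) \<Rightarrow> complex) \<Rightarrow> nat set \<Rightarrow> real" where
  "purity n d \<psi> \<delta> = (\<Sum>x\<in>cfg_on \<delta> d. \<Sum>y\<in>cfg_on \<delta> d. (cmod (reduced_dm n d \<psi> \<delta> x y))^2)"

definition corr_weight ::
    "(nat \<Rightarrow> nat \<Rightarrow> nat \<Rightarrow> complex) \<Rightarrow> nat \<Rightarrow> nat \<Rightarrow> ((nat \<Rightarrow> nat) \<Rightarrow> complex) \<Rightarrow> nat set \<Rightarrow> real" where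
  "corr_weight lam n d \<psi> \<delta> = (\<Sum>i\<in>cfg_on \<delta> (d^2). (cmod (pure_corr lam n d \<psi> i))^2)"

lemma corr_weight_eq_purity:
  assumes gm: "gm_basis d lam" and \<delta>: "\<delta> \<subseteq> {..<n}"
  shows "corr_weight lam n d \<psi> \<delta> = real d ^ card \<delta> * purity n d \<psi> \<delta>"
proof -
  let ?X = "cfg_on \<delta> d" and ?\<rho> = "reduced_dm n d \<psi> \<delta>"
  have fin: "finite \<delta>" using \<delta> by (rule finite_subset) simp
  have "complex_of_real (corr_weight lam n d \<psi> \<delta>)
      = (\<Sum>i\<in>cfg_on \<delta> (d^2). pure_corr lam n d \<psi> i * cnj (pure_corr lam n d \<psi> i))"
    unfolding corr_weight_def by (simp only: of_real_sum complex_norm_square)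
  also have "\<dots> = (\<Sum>i\<in>cfg_on \<delta> (d^2). (\<Sum>x\<in>?X. \<Sum>y\<in>?X. ?\<rho> x y * lam_tensor lam \<delta> i y x)
      * cnj (\<Sum>x\<in>?X. \<Sum>y\<in>?X. ?\<rho> x y * lam_tensor lam \<delta> i y x))"
    by (intro sum.cong refl) (simp add: pure_corr_reduced[OF \<delta>])
  also have "\<dots> = of_nat d ^ card \<delta> * (\<Sum>x\<in>?X. \<Sum>y\<in>?X. ?\<rho> x y * cnj (?\<rho> x y))"
    by (rule lam_tensor_parseval[OF gm fin])
  also have "\<dots> = of_nat d ^ card \<delta> * complex_of_real (purity n d \<psi> \<delta>)"
    unfolding purity_def by (simp only: of_real_sum complex_norm_square)
  also have "\<dots> = complex_of_real (real d ^ card \<delta> * purity n d \<psi> \<delta>)"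
    by simp
  finally show ?thesis by (simp only: of_real_eq_iff)
qed

lemma purity_le:
  assumes \<delta>: "\<delta> \<subseteq> {..<n}"
  shows "purity n d \<psi> \<delta> \<le> (\<Sum>x\<in>cfg_on {..<n} d. (cmod (\<psi> x))^2)^2"
proof -
  define P where "P x = (\<Sum>a\<in>cfg_on ({..<n} - \<delta>) d. (cmod (\<psi> (cfg_join x a)))^2)" for x
  have "purity n d \<psi> \<delta> \<le> (\<Sum>x\<in>cfg_on \<delta> d. \<Sum>y\<in>cfg_on \<delta> d. P x * P y)"
    unfolding purity_def reduced_dm_def P_def by (intro sum_mono cmod_sum_mult_cnj_le)
  also have "\<dots> = (\<Sum>x\<in>cfg_on \<delta> d. P x)^2"
    by (simp add: power2_eq_square sum_product)
  also have "(\<Sum>x\<in>cfg_on \<delta> d. P x) = (\<Sum>x\<in>cfg_on {..<n} d. (cmod (\<psi> x))^2)"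
    unfolding P_def by (rule sum_cfg_on_complement[OF \<delta>, symmetric])
  finally show ?thesis .
qed

lemma purity_full: "purity n d \<psi> {..<n} = (\<Sum>x\<in>cfg_on {..<n} d. (cmod (\<psi> x))^2)^2"
proof -
  have "reduced_dm n d \<psi> {..<n} x y = \<psi> x * cnj (\<psi> y)" for x y
    unfolding reduced_dm_def by (simp add: cfg_on_empty)
  then show ?thesis
    unfolding purity_def
    by (simp add: norm_mult power2_eq_square sum_product power_mult_distrib mult_ac)
qed

lemma purity_complement:
  assumes "\<delta> \<subseteq> {..<n}"
  shows "purity n d \<psi> ({..<n} - \<delta>) = purity n d \<psi> \<delta>"
proof -
  have "{..<n} - ({..<n} - \<delta>) = \<delta>" using assms by auto
  then show ?thesis
    unfolding purity_def reduced_dm_def by (subst sum_norm_gram_swap) (simp add: cfg_join_comm)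
qed

lemma corr_weight_le:
  assumes gm: "gm_basis d lam" and \<delta>: "\<delta> \<subseteq> {..<n}"
    and normalized: "(\<Sum>x\<in>cfg_on {..<n} d. (cmod (\<psi> x))^2) = 1"
  shows "corr_weight lam n d \<psi> \<delta> \<le> real d ^ card \<delta>"
proof -
  have "purity n d \<psi> \<delta> \<le> 1" using purity_le[OF \<delta>, of d \<psi>] normalized by simp
  then show ?thesis unfolding corr_weight_eq_purity[OF gm \<delta>] by (simp add: mult_left_le)
qed

lemma corr_weight_full:
  assumes "gm_basis d lam" and "(\<Sum>x\<in>cfg_on {..<n} d. (cmod (\<psi> x))^2) = 1"
  shows "corr_weight lam n d \<psi> {..<n} = real d ^ n"
  using corr_weight_eq_purity[OF assms(1) order_refl, where \<psi>=\<psi>] purity_full[of n d \<psi>] assms(2)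
  by simp

lemma corr_weight_complement:
  assumes gm: "gm_basis d lam" and \<delta>: "\<delta> \<subseteq> {..<n}"
  shows "corr_weight lam n d \<psi> \<delta> * real d ^ card ({..<n} - \<delta>)
       = corr_weight lam n d \<psi> ({..<n} - \<delta>) * real d ^ card \<delta>"
  using corr_weight_eq_purity[OF gm \<delta>, where \<psi>=\<psi>]
    corr_weight_eq_purity[OF gm Diff_subset, where \<psi>=\<psi>] purity_complement[OF \<delta>, of d \<psi>]
  by (simp add: algebra_simps)

section \<open>Product states\<close>

text \<open>Correlations of a factor \<open>f\<close> on \<open>S\<close>, which need not be normalised by itself.\<close>
definition factor_corr :: "(nat \<Rightarrow> nat \<Rightarrow> nat \<Rightarrow> complex) \<Rightarrow> nat \<Rightarrow> nat set
    \<Rightarrow> ((nat \<Rightarrow> nat) \<Rightarrow> complex) \<Rightarrow> (nat \<Rightarrow> nat) \<Rightarrow> complex" where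
  "factor_corr lam d S f u =
     (\<Sum>x\<in>cfg_on S d. \<Sum>y\<in>cfg_on S d. (f x * cnj (f y)) * lam_tensor lam S u y x)"

lemma pure_corr_product:
  assumes \<beta>: "\<beta> \<subseteq> {..<n}"
    and product: "\<forall>x\<in>cfg_on {..<n} d. \<psi> x = f (restr \<beta> x) * g (restr ({..<n} - \<beta>) x)"
    and u: "u \<in> cfg_on \<beta> D1" and v: "v \<in> cfg_on ({..<n} - \<beta>) D2"
  shows "pure_corr lam n d \<psi> (cfg_join u v)
      = factor_corr lam d \<beta> f u * factor_corr lam d ({..<n} - \<beta>) g v"
proof -
  define R where "R = {..<n} - \<beta>"
  have N: "{..<n} = \<beta> \<union> R" and disj: "\<beta> \<inter> R = {}" using \<beta> unfolding R_def by auto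
  have fin: "finite \<beta>" "finite R" using \<beta> unfolding R_def by (auto intro: finite_subset)
  have factorize: "\<psi> (cfg_join x1 x2) = f x1 * g x2"
    if "x1 \<in> cfg_on \<beta> d" "x2 \<in> cfg_on R d" for x1 x2
  proof -
    have "cfg_join x1 x2 \<in> cfg_on {..<n} d" using cfg_join_in_cfg_on[OF that disj] N by simp
    then have "\<psi> (cfg_join x1 x2) = f (restr \<beta> (cfg_join x1 x2)) * g (restr R (cfg_join x1 x2))"
      using bspec[OF product] unfolding R_def by blast
    then show ?thesis
      using restr_cfg_join_left[OF that disj] restr_cfg_join_right[OF that disj] by simp
  qed
  have "pure_corr lam n d \<psi> (cfg_join u v)
      = (\<Sum>x1\<in>cfg_on \<beta> d. \<Sum>x2\<in>cfg_on R d. \<Sum>y1\<in>cfg_on \<beta> d. \<Sum>y2\<in>cfg_on R d.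
          (\<psi> (cfg_join x1 x2) * cnj (\<psi> (cfg_join y1 y2)))
          * lam_tensor lam (\<beta> \<union> R) (cfg_join u v) (cfg_join y1 y2) (cfg_join x1 x2))"
    unfolding pure_corr_def N by (rule sum_sum_cfg_on_Un[OF disj])
  also have "\<dots> = (\<Sum>x1\<in>cfg_on \<beta> d. \<Sum>x2\<in>cfg_on R d. \<Sum>y1\<in>cfg_on \<beta> d. \<Sum>y2\<in>cfg_on R d.
      ((f x1 * cnj (f y1)) * lam_tensor lam \<beta> u y1 x1)
      * ((g x2 * cnj (g y2)) * lam_tensor lam R v y2 x2))"
  proof (intro sum.cong refl)
    fix x1 x2 y1 y2
    assume h: "x1 \<in> cfg_on \<beta> d" "x2 \<in> cfg_on R d" "y1 \<in> cfg_on \<beta> d" "y2 \<in> cfg_on R d"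
    have "\<psi> (cfg_join x1 x2) = f x1 * g x2" by (rule factorize[OF h(1,2)])
    moreover have "\<psi> (cfg_join y1 y2) = f y1 * g y2" by (rule factorize[OF h(3,4)])
    moreover have "lam_tensor lam (\<beta> \<union> R) (cfg_join u v) (cfg_join y1 y2) (cfg_join x1 x2)
        = lam_tensor lam \<beta> u y1 x1 * lam_tensor lam R v y2 x2"
      by (rule lam_tensor_Un[OF fin disj h(1) h(3) h(2) h(4) u v[folded R_def]])
    ultimately show "(\<psi> (cfg_join x1 x2) * cnj (\<psi> (cfg_join y1 y2)))
        * lam_tensor lam (\<beta> \<union> R) (cfg_join u v) (cfg_join y1 y2) (cfg_join x1 x2)
      = ((f x1 * cnj (f y1)) * lam_tensor lam \<beta> u y1 x1)
        * ((g x2 * cnj (g y2)) * lam_tensor lam R v y2 x2)"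
      by (simp add: mult_ac)
  qed
  also have "\<dots> = factor_corr lam d \<beta> f u * factor_corr lam d R g v"
    unfolding factor_corr_def by (rule sum4_product)
  finally show ?thesis unfolding R_def .
qed

lemma pure_corr_join:
  assumes \<beta>: "\<beta> \<subseteq> {..<n}"
    and product: "\<forall>x\<in>cfg_on {..<n} d. \<psi> x = f (restr \<beta> x) * g (restr ({..<n} - \<beta>) x)"
    and normalized: "(\<Sum>x\<in>cfg_on {..<n} d. (cmod (\<psi> x))^2) = 1"
    and u: "u \<in> cfg_on \<beta> D" and v: "v \<in> cfg_on ({..<n} - \<beta>) D"
  shows "pure_corr lam n d \<psi> (cfg_join u v) = pure_corr lam n d \<psi> u * pure_corr lam n d \<psi> v"
proof -
  let ?R = "{..<n} - \<beta>"
  have z1: "(\<lambda>_. 0) \<in> cfg_on \<beta> 1" and z2: "(\<lambda>_. 0) \<in> cfg_on ?R 1" by (auto simp: cfg_on_def)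
  have cu: "pure_corr lam n d \<psi> u = factor_corr lam d \<beta> f u * factor_corr lam d ?R g (\<lambda>_. 0)"
    using pure_corr_product[OF \<beta> product u z2] by simp
  have cv: "pure_corr lam n d \<psi> v = factor_corr lam d \<beta> f (\<lambda>_. 0) * factor_corr lam d ?R g v"
    using pure_corr_product[OF \<beta> product z1 v] by simp
  have c0: "factor_corr lam d \<beta> f (\<lambda>_. 0) * factor_corr lam d ?R g (\<lambda>_. 0) = 1"
    using pure_corr_product[OF \<beta> product z1 z2, of lam] pure_corr_zero_normalized[OF normalized, of lam]
    by simp
  have "pure_corr lam n d \<psi> (cfg_join u v) = factor_corr lam d \<beta> f u * factor_corr lam d ?R g v"
    by (rule pure_corr_product[OF \<beta> product u v])
  also have "\<dots> = factor_corr lam d \<beta> f u * factor_corr lam d ?R g v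
      * (factor_corr lam d \<beta> f (\<lambda>_. 0) * factor_corr lam d ?R g (\<lambda>_. 0))"
    using c0 by simp
  also have "\<dots> = pure_corr lam n d \<psi> u * pure_corr lam n d \<psi> v"
    unfolding cu cv by (simp add: mult_ac)
  finally show ?thesis .
qed

section \<open>Pure biproduct states\<close>

text \<open>\<open>C\<^sub>n\<^sub>-\<^sub>1\<close> of \<open>|\<psi>\<rangle>\<langle>\<psi>|\<close>, with the sums over subsets and index tuples merged into one sum over
  configurations.\<close>
definition pure_C_nm1 ::
    "(nat \<Rightarrow> nat \<Rightarrow> nat \<Rightarrow> complex) \<Rightarrow> nat \<Rightarrow> nat \<Rightarrow> ((nat \<Rightarrow> nat) \<Rightarrow> complex) \<Rightarrow> real" where
  "pure_C_nm1 lam n d \<psi> = (\<Sum>i\<in>cfg_on {..<n} (d^2).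
     if n - 1 \<le> card (cfg_supp i) then (cmod (pure_corr lam n d \<psi> i))^2 else 0)"

lemma eq_of_mult_eq_bounded:
  fixes a b x y :: real
  assumes eq: "a * b = x * y" and "0 \<le> a" "a \<le> x" "0 \<le> b" "b \<le> y" "0 < x" "0 < y"
  shows "a = x" "b = y"
proof -
  show "a = x"
  proof (rule ccontr)
    assume "a \<noteq> x"
    then have "a * y < x * y" using assms by (intro mult_strict_right_mono) auto
    moreover have "a * b \<le> a * y" using assms by (intro mult_left_mono) auto
    ultimately show False using eq by linarith
  qed
  show "b = y"
  proof (rule ccontr)
    assume "b \<noteq> y"
    then have "x * b < x * y" using assms by (intro mult_strict_left_mono) auto
    moreover have "a * b \<le> x * b" using assms by (intro mult_right_mono) auto
    ultimately show False using eq by linarith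
  qed
qed

lemma power_sub_one_mult_le:
  fixes d :: nat
  assumes "d \<ge> 2" "k \<le> n"
  shows "(real d ^ k - 1) * (real d ^ (n - k) - 1)
    \<le> real d ^ n - 2 * real d powr (real n / 2) + 1"
proof -
  have e: "real d ^ k * real d ^ (n - k) = real d ^ n"
    using assms(2) by (simp add: power_add[symmetric])
  have "sqrt (real d ^ k * real d ^ (n - k)) \<le> (real d ^ k + real d ^ (n - k)) / 2"
    by (rule arith_geo_mean_sqrt) auto
  moreover have "real d powr (real n / 2) = sqrt (real d ^ n)"
    using assms(1) by (simp add: powr_half_sqrt_powr powr_realpow)
  ultimately have "2 * real d powr (real n / 2) \<le> real d ^ k + real d ^ (n - k)" using e by simp
  then show ?thesis using e by (simp add: algebra_simps)
qed

lemma count_bound_arith: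
  fixes d m D L G :: real
  assumes "d \<ge> 2" "m \<ge> 2" "D \<ge> 1" "L \<ge> 1" "G \<ge> 0" "m * D \<le> G + m * L"
  shows "d + (m + 1) / m * (D - 1) \<le> d * L + G"
proof -
  have "m * 2 \<le> m * d" "m * 2 \<le> m * m" using assms by (intro mult_left_mono; simp)+
  then have md: "0 \<le> m * d - m - 1" and mm: "0 \<le> m * m - m - 1" using assms by linarith+
  have "m * d + (m + 1) * (D - 1) \<le> m * (d * L + G)"
  proof (cases "L \<le> D")
    case True
    have "m * (d * L + G) - (m * d + (m + 1) * (D - 1))
        = (L - 1) * (m * d - m - 1) + (D - L) * (m * m - m - 1) + (m * G - m * (m * D - m * L))"
      by (simp add: algebra_simps)
    moreover have "0 \<le> (L - 1) * (m * d - m - 1)" "0 \<le> (D - L) * (m * m - m - 1)"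
      using True assms md mm by simp_all
    moreover have "m * (m * D - m * L) \<le> m * G" using assms by (intro mult_left_mono) auto
    ultimately show ?thesis by linarith
  next
    case False
    have "m * (d * L + G) - (m * d + (m + 1) * (D - 1))
        = (D - 1) * (m * d - m - 1) + m * d * (L - D) + m * G"
      by (simp add: algebra_simps)
    moreover have "0 \<le> (D - 1) * (m * d - m - 1)" "0 \<le> m * d * (L - D)" "0 \<le> m * G"
      using False assms md by simp_all
    ultimately show ?thesis by linarith
  qed
  moreover have "d + (m + 1) / m * (D - 1) = (m * d + (m + 1) * (D - 1)) / m"
    using assms by (simp add: field_simps)
  ultimately show ?thesis using assms by (simp add: pos_divide_le_eq mult.commute)
qed

lemma zero_count_weight_le:
  fixes h :: real
  assumes "s \<le> m" "0 \<le> h"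
  shows "real (m - s) * h \<le> ((if m - 1 \<le> s then h else 0) - (if m \<le> s then h else 0))
    + real m * (h - (if m - 1 \<le> s then h else 0))"
proof -
  consider "s = m" | "s + 1 = m" | "s + 1 < m" using assms(1) by linarith
  then show ?thesis
  proof cases
    case 3
    then have "real (m - s) * h \<le> real m * h" using assms by (intro mult_right_mono) auto
    then show ?thesis using 3 by auto
  qed (use assms in auto)
qed

locale biprod_state =
  fixes lam n d \<psi> \<beta> f g
  assumes gm: "gm_basis d lam" and d2: "d \<ge> 2" and n3: "n \<ge> 3"
    and \<beta>: "\<beta> \<subseteq> {..<n}"
    and product: "\<forall>x\<in>cfg_on {..<n} d. \<psi> x = f (restr \<beta> x) * g (restr ({..<n} - \<beta>) x)"
    and normalized: "(\<Sum>x\<in>cfg_on {..<n} d. (cmod (\<psi> x))^2) = 1"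
begin

abbreviation "R \<equiv> {..<n} - \<beta>"
abbreviation "c \<equiv> pure_corr lam n d \<psi>"
abbreviation "wt u \<equiv> (cmod (c u))^2"
abbreviation "weight S \<equiv> corr_weight lam n d \<psi> S"
abbreviation "Z \<equiv> (\<lambda>_::nat. 0::nat)"

lemma finite_beta: "finite \<beta>"
  using \<beta> by (rule finite_subset) simp

lemma finite_rest: "finite R"
  by simp

lemma card_rest: "card R = n - card \<beta>"
  using \<beta> finite_beta by (simp add: card_Diff_subset)

lemma card_beta_rest: "card \<beta> + card R = n"
  using card_rest card_mono[OF _ \<beta>] by simp

lemma zero_in_cfg_on: "Z \<in> cfg_on S (d^2)"
  using d2 by (simp add: cfg_on_def)

lemma corr_zero: "c Z = 1"
  using pure_corr_zero_normalized[OF normalized] .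

lemma wt_join: "u \<in> cfg_on \<beta> D \<Longrightarrow> v \<in> cfg_on R D \<Longrightarrow> wt (cfg_join u v) = wt u * wt v"
  using pure_corr_join[OF \<beta> product normalized] by (simp add: norm_mult power_mult_distrib)

lemma pure_C_nm1_split:
  "pure_C_nm1 lam n d \<psi> = (\<Sum>u\<in>cfg_on \<beta> (d^2). \<Sum>v\<in>cfg_on R (d^2).
      if n - 1 \<le> card (cfg_supp u) + card (cfg_supp v) then wt u * wt v else 0)"
  unfolding pure_C_nm1_def
proof (subst sum_cfg_on_complement[OF \<beta>], intro sum.cong refl)
  fix u v assume u: "u \<in> cfg_on \<beta> (d^2)" and v: "v \<in> cfg_on R (d^2)"
  show "(if n - 1 \<le> card (cfg_supp (cfg_join u v)) then wt (cfg_join u v) else 0) =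
        (if n - 1 \<le> card (cfg_supp u) + card (cfg_supp v) then wt u * wt v else 0)"
    using card_cfg_supp_join[OF u v _ finite_beta finite_rest] wt_join[OF u v] by simp
qed

lemma weight_beta_mult_rest: "weight \<beta> * weight R = real d ^ n"
proof -
  have "real d ^ n = (\<Sum>i\<in>cfg_on {..<n} (d^2). wt i)"
    using corr_weight_full[OF gm normalized] by (simp add: corr_weight_def)
  also have "\<dots> = (\<Sum>u\<in>cfg_on \<beta> (d^2). \<Sum>v\<in>cfg_on R (d^2). wt u * wt v)"
    by (subst sum_cfg_on_complement[OF \<beta>]) (intro sum.cong refl wt_join)
  also have "\<dots> = weight \<beta> * weight R"
    unfolding corr_weight_def by (simp add: sum_product)
  finally show ?thesis ..
qed

lemma weight_beta: "weight \<beta> = real d ^ card \<beta>"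
  and weight_rest: "weight R = real d ^ card R"
proof -
  have "weight \<beta> * weight R = real d ^ card \<beta> * real d ^ card R"
    using weight_beta_mult_rest card_beta_rest by (simp add: power_add[symmetric])
  moreover have "0 \<le> weight \<beta>" "0 \<le> weight R"
    unfolding corr_weight_def by (simp_all add: sum_nonneg)
  moreover have "weight \<beta> \<le> real d ^ card \<beta>" "weight R \<le> real d ^ card R"
    using corr_weight_le[OF gm \<beta> normalized] corr_weight_le[OF gm Diff_subset normalized] by auto
  moreover have "0 < real d ^ card \<beta>" "0 < real d ^ card R"
    using d2 by auto
  ultimately show "weight \<beta> = real d ^ card \<beta>" "weight R = real d ^ card R"
    using eq_of_mult_eq_bounded by blast+
qed

lemma weight_ge_one: "finite S \<Longrightarrow> 1 \<le> weight S"
  unfolding corr_weight_def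
  using member_le_sum[of Z "cfg_on S (d^2)" wt] zero_in_cfg_on corr_zero finite_cfg_on by auto

lemma pure_C_nm1_le_balanced:
  assumes "card \<beta> \<ge> 2" "card R \<ge> 2"
  shows "pure_C_nm1 lam n d \<psi> \<le> (real d ^ card \<beta> - 1) * (real d ^ card R - 1)"
proof -
  have "pure_C_nm1 lam n d \<psi> \<le> (\<Sum>u\<in>cfg_on \<beta> (d^2). \<Sum>v\<in>cfg_on R (d^2).
      (if u \<noteq> Z then wt u else 0) * (if v \<noteq> Z then wt v else 0))"
    unfolding pure_C_nm1_split
  proof (intro sum_mono)
    fix u v assume u: "u \<in> cfg_on \<beta> (d^2)" and v: "v \<in> cfg_on R (d^2)"
    have "card (cfg_supp u) \<le> card \<beta>" "card (cfg_supp v) \<le> card R"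
      using card_cfg_supp_le[OF finite_beta u] card_cfg_supp_le[OF finite_rest v] .
    then have "n - 1 \<le> card (cfg_supp u) + card (cfg_supp v) \<Longrightarrow> u \<noteq> Z \<and> v \<noteq> Z"
      using assms card_beta_rest by auto
    then show "(if n - 1 \<le> card (cfg_supp u) + card (cfg_supp v) then wt u * wt v else 0)
        \<le> (if u \<noteq> Z then wt u else 0) * (if v \<noteq> Z then wt v else 0)"
      by auto
  qed
  also have "\<dots> = (\<Sum>u\<in>cfg_on \<beta> (d^2). if u \<noteq> Z then wt u else 0)
      * (\<Sum>v\<in>cfg_on R (d^2). if v \<noteq> Z then wt v else 0)"
    by (simp add: sum_product)
  also have "\<dots> = (real d ^ card \<beta> - 1) * (real d ^ card R - 1)"
    using sum_if_neq[OF finite_cfg_on[OF finite_beta] zero_in_cfg_on, of wt]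
      sum_if_neq[OF finite_cfg_on[OF finite_rest] zero_in_cfg_on, of wt] weight_beta weight_rest
    by (simp add: corr_zero corr_weight_def)
  finally show ?thesis .
qed

end

locale singleton_biprod_state = biprod_state +
  fixes b
  assumes singleton: "\<beta> = {b}"
begin

lemma card_rest_singleton: "card R = n - 1"
  using card_beta_rest singleton by simp

definition tail_weight :: "nat \<Rightarrow> real" where
  "tail_weight k = (\<Sum>v\<in>cfg_on R (d^2). if k \<le> card (cfg_supp v) then wt v else 0)"

lemma tail_weight_zero: "tail_weight 0 = real d ^ (n - 1)"
  using weight_rest card_rest_singleton by (simp add: tail_weight_def corr_weight_def)

lemma tail_weight_antimono: "k \<le> l \<Longrightarrow> tail_weight l \<le> tail_weight k"
  unfolding tail_weight_def by (intro sum_mono) auto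

lemma pure_C_nm1_eq_tail_weight:
  "pure_C_nm1 lam n d \<psi>
      = real d * tail_weight (n - 2) + (tail_weight (n - 1) - tail_weight (n - 2))"
proof -
  let ?F = "tail_weight (n - 1)" and ?H = "tail_weight (n - 2)"
  have "pure_C_nm1 lam n d \<psi> = (\<Sum>u\<in>cfg_on \<beta> (d^2). wt u * (if u = Z then ?F else ?H))"
    unfolding pure_C_nm1_split
  proof (intro sum.cong refl)
    fix u assume u: "u \<in> cfg_on \<beta> (d^2)"
    show "(\<Sum>v\<in>cfg_on R (d^2).
          if n - 1 \<le> card (cfg_supp u) + card (cfg_supp v) then wt u * wt v else 0)
        = wt u * (if u = Z then ?F else ?H)"
    proof (cases "u = Z")
      case True
      then show ?thesis
        unfolding tail_weight_def by (simp add: sum_distrib_left if_distrib cong: if_cong)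
    next
      case False
      then have "cfg_supp u \<noteq> {}" using cfg_supp_empty_iff by blast
      then have "cfg_supp u = {b}" using cfg_supp_subset[OF u] singleton by blast
      then have "(\<Sum>v\<in>cfg_on R (d^2).
            if n - 1 \<le> card (cfg_supp u) + card (cfg_supp v) then wt u * wt v else 0)
          = (\<Sum>v\<in>cfg_on R (d^2). wt u * (if n - 2 \<le> card (cfg_supp v) then wt v else 0))"
        using n3 by (intro sum.cong refl) auto
      then show ?thesis using False unfolding tail_weight_def by (simp add: sum_distrib_left)
    qed
  qed
  also have "\<dots> = (\<Sum>u\<in>cfg_on \<beta> (d^2). wt u * ?H + (if u = Z then wt u * (?F - ?H) else 0))"
    by (intro sum.cong refl) (auto simp: algebra_simps)
  also have "\<dots> = (\<Sum>u\<in>cfg_on \<beta> (d^2). wt u) * ?H + (?F - ?H)"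
    using finite_cfg_on[OF finite_beta] zero_in_cfg_on corr_zero
    by (simp add: sum.distrib sum_distrib_right sum.delta')
  also have "\<dots> = real d * ?H + (?F - ?H)"
    using weight_beta singleton by (simp add: corr_weight_def)
  finally show ?thesis .
qed

lemma tail_weight_gap: "1 \<le> tail_weight 0 - tail_weight (n - 2)"
proof -
  have "tail_weight 0 - tail_weight (n - 2)
      = (\<Sum>v\<in>cfg_on R (d^2). if n - 2 \<le> card (cfg_supp v) then 0 else wt v)"
    unfolding tail_weight_def by (simp add: sum_subtractf[symmetric] if_distrib cong: if_cong)
  also have "\<dots> \<ge> (if n - 2 \<le> card (cfg_supp Z) then 0 else wt Z)"
    by (rule member_le_sum) (use finite_cfg_on[OF finite_rest] zero_in_cfg_on in auto)
  finally show ?thesis using n3 corr_zero by simp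
qed

text \<open>The marginal on \<open>R - {j}\<close> is as pure as the marginal on the complement \<open>{b, j}\<close>, whose
  weight is \<open>weight {b} * weight {j} \<ge> d\<close>.\<close>
lemma weight_delete_ge:
  assumes j: "j \<in> R"
  shows "real d ^ (n - 3) \<le> weight (R - {j})"
proof -
  define \<delta> where "\<delta> = R - {j}"
  have \<delta>: "\<delta> \<subseteq> {..<n}" unfolding \<delta>_def by auto
  have bj: "b \<noteq> j" using j singleton by auto
  have comp: "{..<n} - \<delta> = {b} \<union> {j}" using j singleton \<beta> unfolding \<delta>_def by auto
  have card_\<delta>: "card \<delta> = n - 2" unfolding \<delta>_def using card_rest_singleton j by simp
  have card_comp: "card ({..<n} - \<delta>) = 2" unfolding comp using bj by simp
  have "weight ({b} \<union> {j}) = (\<Sum>u\<in>cfg_on {b} (d^2). \<Sum>w\<in>cfg_on {j} (d^2). wt (cfg_join u w))"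
    unfolding corr_weight_def using bj by (intro sum_cfg_on_Un) auto
  also have "\<dots> = (\<Sum>u\<in>cfg_on {b} (d^2). \<Sum>w\<in>cfg_on {j} (d^2). wt u * wt w)"
  proof (intro sum.cong refl)
    fix u w assume u: "u \<in> cfg_on {b} (d^2)" and w: "w \<in> cfg_on {j} (d^2)"
    have "w \<in> cfg_on R (d^2)" using cfg_on_mono[of "{j}" R "d^2"] j d2 w by auto
    then show "wt (cfg_join u w) = wt u * wt w" using u singleton by (simp add: wt_join)
  qed
  also have "\<dots> = weight {b} * weight {j}"
    unfolding corr_weight_def by (rule sum_product[symmetric])
  also have "\<dots> = real d * weight {j}"
    using weight_beta singleton by simp
  also have "\<dots> \<ge> real d * 1"
    using weight_ge_one[of "{j}"] by (intro mult_left_mono) auto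
  finally have big: "real d \<le> weight ({..<n} - \<delta>)" unfolding comp by simp
  have "n - 3 + 2 = Suc (n - 2)" using n3 by auto
  then have "real d ^ (n - 3) * real d ^ 2 = real d * real d ^ (n - 2)"
    by (metis power_add power_Suc)
  also have "\<dots> \<le> weight ({..<n} - \<delta>) * real d ^ (n - 2)"
    using big by (intro mult_right_mono) auto
  also have "\<dots> = weight \<delta> * real d ^ 2"
    using corr_weight_complement[OF gm \<delta>, of \<psi>] card_\<delta> card_comp by simp
  finally show ?thesis unfolding \<delta>_def using d2 by (simp add: mult_le_cancel_right)
qed

text \<open>Double counting: a configuration \<open>v\<close> on the rest is counted once for each of its
  \<open>n - 1 - |supp v|\<close> zero positions.\<close>
lemma sum_weight_delete_le:
  "(\<Sum>j\<in>R. weight (R - {j}))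
    \<le> (tail_weight (n - 2) - tail_weight (n - 1))
      + real (n - 1) * (tail_weight 0 - tail_weight (n - 2))"
proof -
  have "(\<Sum>j\<in>R. weight (R - {j})) = (\<Sum>j\<in>R. \<Sum>v\<in>cfg_on R (d^2). if v j = 0 then wt v else 0)"
  proof (rule sum.cong[OF refl])
    fix j assume "j \<in> R"
    then have "cfg_on (R - {j}) (d^2) = {v \<in> cfg_on R (d^2). v j = 0}"
      using d2 by (intro cfg_on_Diff_singleton) auto
    then show "weight (R - {j}) = (\<Sum>v\<in>cfg_on R (d^2). if v j = 0 then wt v else 0)"
      unfolding corr_weight_def by (simp add: sum.inter_filter[OF finite_cfg_on[OF finite_rest]])
  qed
  also have "\<dots> = (\<Sum>v\<in>cfg_on R (d^2). \<Sum>j\<in>R. if v j = 0 then wt v else 0)"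
    by (rule sum.swap)
  also have "\<dots> = (\<Sum>v\<in>cfg_on R (d^2). real (card R - card (cfg_supp v)) * wt v)"
  proof (intro sum.cong refl)
    fix v assume v: "v \<in> cfg_on R (d^2)"
    have "{j\<in>R. v j = 0} = R - cfg_supp v" by (auto simp: cfg_supp_def)
    then have "card {j\<in>R. v j = 0} = card R - card (cfg_supp v)"
      using cfg_supp_subset[OF v] finite_subset[OF cfg_supp_subset[OF v] finite_rest]
      by (simp add: card_Diff_subset)
    then show "(\<Sum>j\<in>R. if v j = 0 then wt v else 0) = real (card R - card (cfg_supp v)) * wt v"
      by (simp add: sum.inter_filter[OF finite_rest, symmetric])
  qed
  also have "\<dots> \<le> (\<Sum>v\<in>cfg_on R (d^2).
      ((if n - 2 \<le> card (cfg_supp v) then wt v else 0)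
        - (if n - 1 \<le> card (cfg_supp v) then wt v else 0))
      + real (n - 1) * (wt v - (if n - 2 \<le> card (cfg_supp v) then wt v else 0)))"
  proof (rule sum_mono)
    fix v assume v: "v \<in> cfg_on R (d^2)"
    have "card (cfg_supp v) \<le> n - 1"
      using card_cfg_supp_le[OF finite_rest v] card_rest_singleton by simp
    from zero_count_weight_le[OF this zero_le_power2]
    show "real (card R - card (cfg_supp v)) * wt v
      \<le> ((if n - 2 \<le> card (cfg_supp v) then wt v else 0)
          - (if n - 1 \<le> card (cfg_supp v) then wt v else 0))
        + real (n - 1) * (wt v - (if n - 2 \<le> card (cfg_supp v) then wt v else 0))"
      unfolding card_rest_singleton by (simp only: diff_diff_left one_add_one)
  qed
  also have "\<dots> = (tail_weight (n - 2) - tail_weight (n - 1))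
      + real (n - 1) * (tail_weight 0 - tail_weight (n - 2))"
    unfolding tail_weight_def
    by (simp add: sum.distrib sum_subtractf sum_distrib_left right_diff_distrib)
  finally show ?thesis .
qed

lemma pure_C_nm1_le_singleton:
  "pure_C_nm1 lam n d \<psi> \<le> (real d - 1) * (real d ^ (n - 1) - 1) + real d ^ (n - 1) - 1
     - real n / (real n - 1) * (real d ^ (n - 3) - 1)"
proof -
  let ?F = "tail_weight (n - 1)" and ?H = "tail_weight (n - 2)" and ?T = "tail_weight 0"
  have "real (n - 1) * real d ^ (n - 3) = (\<Sum>j\<in>R. real d ^ (n - 3))"
    using card_rest_singleton by simp
  also have "\<dots> \<le> (\<Sum>j\<in>R. weight (R - {j}))"
    using weight_delete_ge by (intro sum_mono) auto
  also have "\<dots> \<le> (?H - ?F) + real (n - 1) * (?T - ?H)"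
    by (rule sum_weight_delete_le)
  finally have count: "real (n - 1) * real d ^ (n - 3) \<le> (?H - ?F) + real (n - 1) * (?T - ?H)" .
  have "real d + (real (n - 1) + 1) / real (n - 1) * (real d ^ (n - 3) - 1)
      \<le> real d * (?T - ?H) + (?H - ?F)"
    using d2 n3 tail_weight_gap tail_weight_antimono[of "n - 2" "n - 1"] count
    by (intro count_bound_arith) (auto simp: one_le_power)
  moreover have "real (n - 1) = real n - 1" using n3 by (simp add: of_nat_diff)
  ultimately have "real d + real n / (real n - 1) * (real d ^ (n - 3) - 1)
      \<le> real d * (?T - ?H) + (?H - ?F)"
    by simp
  moreover have "real d * (?T - ?H) = real d * real d ^ (n - 1) - real d * ?H"
    by (simp add: tail_weight_zero algebra_simps)
  moreover have "(real d - 1) * (real d ^ (n - 1) - 1)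
      = real d * real d ^ (n - 1) - real d - real d ^ (n - 1) + 1"
    by (simp add: algebra_simps)
  ultimately show ?thesis using pure_C_nm1_eq_tail_weight by linarith
qed

end

context biprod_state
begin

lemma biprod_state_swap: "biprod_state lam n d \<psi> R g f"
proof
  have "{..<n} - R = \<beta>" using \<beta> by auto
  then show "\<forall>x\<in>cfg_on {..<n} d. \<psi> x = g (restr R x) * f (restr ({..<n} - R) x)"
    using product by (simp add: mult.commute)
qed (use gm d2 n3 normalized in auto)

lemma pure_C_nm1_le_card_one:
  assumes "card \<beta> = 1"
  shows "pure_C_nm1 lam n d \<psi> \<le> (real d - 1) * (real d ^ (n - 1) - 1) + real d ^ (n - 1) - 1
     - real n / (real n - 1) * (real d ^ (n - 3) - 1)"
proof -
  obtain b where "\<beta> = {b}" using assms by (rule card_1_singletonE)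
  then interpret singleton_biprod_state lam n d \<psi> \<beta> f g b
    by (intro singleton_biprod_state.intro singleton_biprod_state_axioms.intro biprod_state_axioms)
  show ?thesis by (rule pure_C_nm1_le_singleton)
qed

end

lemma pure_C_nm1_le:
  assumes gm: "gm_basis d lam" and d2: "d \<ge> 2" and n3: "n \<ge> 3" and pure: "pure_biprod n d \<psi>"
  shows "pure_C_nm1 lam n d \<psi> \<le> max (real d ^ n - 2 * real d powr (real n / 2) + 1)
        ((real d - 1) * (real d ^ (n - 1) - 1) + real d ^ (n - 1) - 1
          - real n / (real n - 1) * (real d ^ (n - 3) - 1))"
proof -
  obtain \<beta> f g where \<beta>: "\<beta> \<subseteq> {..<n}" "\<beta> \<noteq> {}" "\<beta> \<noteq> {..<n}"
    and product: "\<forall>x\<in>cfg_on {..<n} d. \<psi> x = f (restr \<beta> x) * g (restr ({..<n} - \<beta>) x)"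
    using pure unfolding pure_biprod_def cfg_eq_cfg_on by blast
  have "(\<Sum>x\<in>cfg_on {..<n} d. (cmod (\<psi> x))^2) = 1"
    using pure unfolding pure_biprod_def cfg_eq_cfg_on by blast
  then interpret B1: biprod_state lam n d \<psi> \<beta> f g
    using gm d2 n3 \<beta>(1) product by unfold_locales
  interpret B2: biprod_state lam n d \<psi> "{..<n} - \<beta>" g f
    by (rule B1.biprod_state_swap)
  have "card \<beta> \<noteq> 0" "card ({..<n} - \<beta>) \<noteq> 0"
    using \<beta> B1.finite_beta by auto
  then consider "card \<beta> = 1" | "card ({..<n} - \<beta>) = 1" | "card \<beta> \<ge> 2" "card ({..<n} - \<beta>) \<ge> 2"
    by linarith
  then show ?thesis
  proof cases
    case 3
    have "pure_C_nm1 lam n d \<psi> \<le> (real d ^ card \<beta> - 1) * (real d ^ (n - card \<beta>) - 1)"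
      using B1.pure_C_nm1_le_balanced[OF 3] by (simp add: B1.card_rest)
    also have "\<dots> \<le> real d ^ n - 2 * real d powr (real n / 2) + 1"
      using card_mono[OF _ \<beta>(1)] by (intro power_sub_one_mult_le[OF d2]) simp
    finally show ?thesis by simp
  qed (use B1.pure_C_nm1_le_card_one B2.pure_C_nm1_le_card_one in auto)
qed

section \<open>Biseparable states\<close>

lemma idx_tuples_eq:
  assumes "\<alpha> \<subseteq> {..<n}" "d \<ge> 1"
  shows "idx_tuples d \<alpha> = {i \<in> cfg_on {..<n} (d^2). cfg_supp i = \<alpha>}"
proof (rule Set.set_eqI, rule iffI)
  fix i assume "i \<in> idx_tuples d \<alpha>"
  then have on: "\<forall>k\<in>\<alpha>. 1 \<le> i k \<and> i k \<le> d^2 - 1" and off: "\<forall>k. k \<notin> \<alpha> \<longrightarrow> i k = 0"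
    unfolding idx_tuples_def by auto
  have "0 < d^2" using assms(2) by simp
  then have "i k < d^2" for k
    using on off by (cases "k \<in> \<alpha>") auto
  moreover have "cfg_supp i = \<alpha>"
    using on off unfolding cfg_supp_def by fastforce
  ultimately show "i \<in> {i \<in> cfg_on {..<n} (d^2). cfg_supp i = \<alpha>}"
    using assms(1) off unfolding cfg_on_def by auto
next
  fix i assume "i \<in> {i \<in> cfg_on {..<n} (d^2). cfg_supp i = \<alpha>}"
  then have "\<forall>k<n. i k < d^2" "cfg_supp i = \<alpha>" unfolding cfg_on_def by auto
  then show "i \<in> idx_tuples d \<alpha>"
    using assms(1) unfolding idx_tuples_def cfg_supp_def by fastforce
qed

lemma convex_comb_square_le:
  fixes p r :: "nat \<Rightarrow> real"
  assumes "\<forall>j<m. p j \<ge> 0" "(\<Sum>j<m. p j) = 1"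
  shows "(\<Sum>j<m. p j * r j)^2 \<le> (\<Sum>j<m. p j * (r j)^2)"
proof -
  have "(\<Sum>j<m. p j * r j) = (\<Sum>j<m. sqrt (p j) * (sqrt (p j) * r j))"
    using assms(1) by (intro sum.cong refl) (simp add: mult.assoc[symmetric])
  then have "(\<Sum>j<m. p j * r j)^2 \<le> (\<Sum>j<m. (sqrt (p j))^2) * (\<Sum>j<m. (sqrt (p j) * r j)^2)"
    using Cauchy_Schwarz_ineq_sum[of "\<lambda>j. sqrt (p j)" "\<lambda>j. sqrt (p j) * r j" "{..<m}"] by simp
  also have "(\<Sum>j<m. (sqrt (p j))^2) = 1" using assms by simp
  also have "(\<Sum>j<m. (sqrt (p j) * r j)^2) = (\<Sum>j<m. p j * (r j)^2)"
    using assms(1) by (intro sum.cong refl) (simp add: power_mult_distrib)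
  finally show ?thesis by simp
qed

lemma corr_mixture:
  assumes i: "i \<in> idx_tuples d \<alpha>"
    and \<rho>: "\<forall>x\<in>cfg n d. \<forall>y\<in>cfg n d. \<rho> x y = (\<Sum>j<m. complex_of_real (p j) * \<psi> j x * cnj (\<psi> j y))"
  shows "corr n d lam \<rho> \<alpha> i = (\<Sum>j<m. complex_of_real (p j) * pure_corr lam n d (\<psi> j) i)"
proof -
  have op: "corr_op n lam \<alpha> i y x = lam_tensor lam {..<n} i y x" for y x
    unfolding corr_op_def lam_tensor_def
  proof (rule prod.cong[OF refl])
    fix k assume "k \<in> {..<n}"
    show "(if k \<in> \<alpha> then lam (i k) (y k) (x k) else (if y k = x k then 1 else 0))
        = lam_ext lam (i k) (y k) (x k)"
      using i unfolding idx_tuples_def lam_ext_def by auto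
  qed
  have "corr n d lam \<rho> \<alpha> i = (\<Sum>x\<in>cfg n d. \<Sum>y\<in>cfg n d.
      (\<Sum>j<m. complex_of_real (p j) * \<psi> j x * cnj (\<psi> j y)) * lam_tensor lam {..<n} i y x)"
    unfolding corr_def op using \<rho> by (intro sum.cong refl) auto
  also have "\<dots> = (\<Sum>x\<in>cfg n d. \<Sum>y\<in>cfg n d. \<Sum>j<m.
      complex_of_real (p j) * ((\<psi> j x * cnj (\<psi> j y)) * lam_tensor lam {..<n} i y x))"
    by (rule sum.cong[OF refl], rule sum.cong[OF refl]) (simp add: sum_distrib_right mult.assoc)
  also have "\<dots> = (\<Sum>j<m. \<Sum>x\<in>cfg n d. \<Sum>y\<in>cfg n d.
      complex_of_real (p j) * ((\<psi> j x * cnj (\<psi> j y)) * lam_tensor lam {..<n} i y x))"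
    by (rule sum_swap3[symmetric])
  also have "\<dots> = (\<Sum>j<m. complex_of_real (p j) * pure_corr lam n d (\<psi> j) i)"
    unfolding pure_corr_def cfg_eq_cfg_on by (simp add: sum_distrib_left)
  finally show ?thesis .
qed

lemma sum_idx_tuples_regroup:
  assumes "d \<ge> 1"
  shows "(\<Sum>\<alpha>\<in>{\<alpha>. \<alpha> \<subseteq> {..<n} \<and> card \<alpha> \<ge> n - 1}. \<Sum>i\<in>idx_tuples d \<alpha>. F i)
       = (\<Sum>i\<in>cfg_on {..<n} (d^2). (if n - 1 \<le> card (cfg_supp i) then F i else 0))"
proof -
  let ?A = "{\<alpha>. \<alpha> \<subseteq> {..<n} \<and> card \<alpha> \<ge> n - 1}"
  let ?S = "{i \<in> cfg_on {..<n} (d^2). n - 1 \<le> card (cfg_supp i)}"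
  have fS: "finite ?S" using finite_cfg_on[of "{..<n}" "d^2"] by simp
  have fA: "finite ?A" by (rule finite_subset[of _ "Pow {..<n}"]) auto
  have im: "cfg_supp ` ?S \<subseteq> ?A" by (auto dest: cfg_supp_subset)
  have "(\<Sum>\<alpha>\<in>?A. \<Sum>i\<in>idx_tuples d \<alpha>. F i) = (\<Sum>\<alpha>\<in>?A. \<Sum>i\<in>{x. x \<in> ?S \<and> cfg_supp x = \<alpha>}. F i)"
  proof (rule sum.cong[OF refl])
    fix \<alpha> assume a: "\<alpha> \<in> ?A"
    have "idx_tuples d \<alpha> = {x. x \<in> ?S \<and> cfg_supp x = \<alpha>}"
      using idx_tuples_eq[of \<alpha> n d] a assms by auto
    then show "(\<Sum>i\<in>idx_tuples d \<alpha>. F i) = (\<Sum>i\<in>{x. x \<in> ?S \<and> cfg_supp x = \<alpha>}. F i)" by simp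
  qed
  also have "\<dots> = (\<Sum>i\<in>?S. F i)" by (rule sum.group[OF fS fA im])
  also have "\<dots> = (\<Sum>i\<in>cfg_on {..<n} (d^2). (if n - 1 \<le> card (cfg_supp i) then F i else 0))"
    by (rule sum.inter_filter[OF finite_cfg_on]) simp
  finally show ?thesis .
qed

lemma C_nm1_le_mixture:
  fixes p :: "nat \<Rightarrow> real"
  assumes "d \<ge> 1" and p0: "\<forall>j<m. p j \<ge> 0" and p1: "(\<Sum>j<m. p j) = 1"
    and \<rho>: "\<forall>x\<in>cfg n d. \<forall>y\<in>cfg n d. \<rho> x y = (\<Sum>j<m. complex_of_real (p j) * \<psi> j x * cnj (\<psi> j y))"
  shows "C_nm1 n d lam \<rho> \<le> (\<Sum>j<m. p j * pure_C_nm1 lam n d (\<psi> j))"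
proof -
  let ?A = "{\<alpha>. \<alpha> \<subseteq> {..<n} \<and> card \<alpha> \<ge> n - 1}"
  let ?w = "\<lambda>j i. (cmod (pure_corr lam n d (\<psi> j) i))^2"
  have pointwise: "(Re (corr n d lam \<rho> \<alpha> i))^2 \<le> (\<Sum>j<m. p j * ?w j i)"
    if "i \<in> idx_tuples d \<alpha>" for \<alpha> i
  proof -
    have "Re (corr n d lam \<rho> \<alpha> i) = (\<Sum>j<m. p j * Re (pure_corr lam n d (\<psi> j) i))"
      using corr_mixture[OF that \<rho>] by simp
    then have "(Re (corr n d lam \<rho> \<alpha> i))^2 \<le> (\<Sum>j<m. p j * (Re (pure_corr lam n d (\<psi> j) i))^2)"
      using convex_comb_square_le[OF p0 p1] by simp
    also have "\<dots> \<le> (\<Sum>j<m. p j * ?w j i)"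
      using p0 by (intro sum_mono mult_left_mono) (auto simp: cmod_power2)
    finally show ?thesis .
  qed
  have "C_nm1 n d lam \<rho> \<le> (\<Sum>\<alpha>\<in>?A. \<Sum>i\<in>idx_tuples d \<alpha>. \<Sum>j<m. p j * ?w j i)"
    unfolding C_nm1_def tau_sq_def using pointwise by (intro sum_mono) auto
  also have "\<dots> = (\<Sum>i\<in>cfg_on {..<n} (d^2).
      if n - 1 \<le> card (cfg_supp i) then (\<Sum>j<m. p j * ?w j i) else 0)"
    by (rule sum_idx_tuples_regroup[OF assms(1)])
  also have "\<dots> = (\<Sum>i\<in>cfg_on {..<n} (d^2). \<Sum>j<m.
      p j * (if n - 1 \<le> card (cfg_supp i) then ?w j i else 0))"
    by (intro sum.cong refl) simp
  also have "\<dots> = (\<Sum>j<m. p j * pure_C_nm1 lam n d (\<psi> j))"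
    unfolding pure_C_nm1_def by (subst sum.swap) (simp add: sum_distrib_left)
  finally show ?thesis .
qed

theorem corollary2:
  fixes n d :: nat and lam :: "nat \<Rightarrow> nat \<Rightarrow> nat \<Rightarrow> complex"
    and \<rho> :: "(nat \<Rightarrow> nat) \<Rightarrow> (nat \<Rightarrow> nat) \<Rightarrow> complex"
  assumes "n \<ge> 3" and "d \<ge> 2"
    and "gm_basis d lam"
    and "biseparable n d \<rho>"
  shows "C_nm1 n d lam \<rho> \<le>
    max (real d ^ n - 2 * real d powr (real n / 2) + 1)
        ((real d - 1) * (real d ^ (n - 1) - 1) + real d ^ (n - 1) - 1
          - real n / (real n - 1) * (real d ^ (n - 3) - 1))"
proof -
  let ?M = "max (real d ^ n - 2 * real d powr (real n / 2) + 1)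
        ((real d - 1) * (real d ^ (n - 1) - 1) + real d ^ (n - 1) - 1
          - real n / (real n - 1) * (real d ^ (n - 3) - 1))"
  obtain m :: nat and p :: "nat \<Rightarrow> real" and \<psi> :: "nat \<Rightarrow> (nat \<Rightarrow> nat) \<Rightarrow> complex"
    where p0: "\<forall>j<m. p j \<ge> 0" and p1: "(\<Sum>j<m. p j) = 1"
    and pure: "\<forall>j<m. pure_biprod n d (\<psi> j)"
    and \<rho>: "\<forall>x\<in>cfg n d. \<forall>y\<in>cfg n d. \<rho> x y = (\<Sum>j<m. complex_of_real (p j) * \<psi> j x * cnj (\<psi> j y))"
    using assms(4) unfolding biseparable_def by blast
  have "C_nm1 n d lam \<rho> \<le> (\<Sum>j<m. p j * pure_C_nm1 lam n d (\<psi> j))"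
    using assms(2) by (intro C_nm1_le_mixture[OF _ p0 p1 \<rho>]) simp
  also have "\<dots> \<le> (\<Sum>j<m. p j * ?M)"
    using p0 pure pure_C_nm1_le[OF assms(3,2,1)] by (intro sum_mono mult_left_mono) auto
  also have "\<dots> = ?M"
    using p1 by (simp add: sum_distrib_right[symmetric])
  finally show ?thesis .
qed

end
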